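(* Consider an affine resource theory, with free sets $\mathcal F$ on the input space and $\mathcal F'$ on the output space. For states $\rho$ (input) and $\rho'$ (output), there exists a resource--non-generating probabilistic transformation $\rho\to\rho'$ (in the sense defined below) if any of the following holds: (i) $\infty>\Omega_{\mathcal F}(\rho)\ge\Omega_{\mathcal F'}(\rho')$; (ii) $\Omega_{\mathcal F}(\rho)=\infty$ and $R_{\mathcal F'}(\rho')<\infty$; (iii) $R_{\mathcal F}(\rho)=\infty$.
   Context: Finite dimensions; $A\le B$ means $B-A\ge0$; $\langle A,B\rangle=\mathrm{Tr}(AB)$. Each space carries a closed convex set of free states $\mathcal F$ (density operators). The theory is affine: on each space $\mathcal F=\mathrm{aff}(\mathcal F)\cap\mathcal D$, where $\mathcal D$ is the set of density operators and $\mathrm{aff}$ is the affine hull. $R_{\max}(X\|Y)=\inf\{\lambda:X\le\lambda Y\}$ (with $\inf\emptyset=\infty$); $R_{\mathcal F}(\rho)=\min_{\sigma\in\mathcal F}R_{\max}(\rho\|\sigma)$; $\Omega_{\mathcal F}(\rho)=\inf_{\sigma\in\mathcal F}R_{\max}(\rho\|\sigma)R_{\max}(\sigma\|\rho)$. $\mathbb O$ is the set of completely positive trace-non-increasing maps $\mathcal E$ from input to output operators such that for every $\sigma\in\mathcal F$ there exist $\sigma'\in\mathcal F'$ and $p\in[0,1]$ with $\mathcal E(\sigma)=p\sigma'$. A probabilistic transformation $\rho\to\rho'$ exists iff $\rho'$ lies in the closure of $\{\mathcal E(\rho)/\mathrm{Tr}\,\mathcal E(\rho):\ \mathcal E\in\mathbb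 O,\ \mathrm{Tr}\,\mathcal E(\rho)>0\}$. *)

theory Defs
  imports "HOL-Analysis.Analysis"
begin

text \<open>Operators on a finite-dimensional Hilbert space with orthonormal basis indexed by
  the finite type 'n are complex matrices of type complex^'n^'n.\<close>

definition cinner :: "complex^'n \<Rightarrow> complex^'n \<Rightarrow> complex" where
  "cinner x y = (\<Sum>i\<in>UNIV. cnj (x$i) * y$i)"

definition psd :: "complex^'n^'n \<Rightarrow> bool" where
  "psd A \<longleftrightarrow> (\<forall>x. Im (cinner x (A *v x)) = 0 \<and> Re (cinner x (A *v x)) \<ge> 0)"

definition loewner_le :: "complex^'n^'n \<Rightarrow> complex^'n^'n \<Rightarrow> bool" where
  "loewner_le A B \<longleftrightarrow> psd (B - A)"

definition density_ops :: "(complex^'n^'n) set" where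
  "density_ops = {\<rho>. psd \<rho> \<and> trace \<rho> = 1}"

definition cscale :: "complex \<Rightarrow> complex^'n^'n \<Rightarrow> complex^'n^'n" where
  "cscale c A = (\<chi> i j. c * A$i$j)"

text \<open>R_max(X||Y) = inf {lambda. X \<le> lambda Y}, with inf of the empty set = \<infinity>.\<close>
definition Rmax :: "complex^'n^'n \<Rightarrow> complex^'n^'n \<Rightarrow> ereal" where
  "Rmax X Y = Inf {ereal l | l. loewner_le X (l *\<^sub>R Y)}"

definition RF :: "(complex^'n^'n) set \<Rightarrow> complex^'n^'n \<Rightarrow> ereal" where
  "RF F \<rho> = (INF \<sigma>\<in>F. Rmax \<rho> \<sigma>)"

definition OmegaF :: "(complex^'n^'n) set \<Rightarrow> complex^'n^'n \<Rightarrow> ereal" where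
  "OmegaF F \<rho> = (INF \<sigma>\<in>F. Rmax \<rho> \<sigma> * Rmax \<sigma> \<rho>)"

definition affine_free_set :: "(complex^'n^'n) set \<Rightarrow> bool" where
  "affine_free_set F \<longleftrightarrow> F \<noteq> {} \<and> closed F \<and> convex F \<and> F \<subseteq> density_ops
     \<and> F = affine hull F \<inter> density_ops"

definition clinear_map :: "(complex^'a^'a \<Rightarrow> complex^'b^'b) \<Rightarrow> bool" where
  "clinear_map E \<longleftrightarrow> (\<forall>A B. E (A + B) = E A + E B) \<and> (\<forall>c A. E (cscale c A) = cscale c (E A))"

text \<open>Positivity of a k x k block matrix with blocks M a b (a, b < k), i.e. of an operator
  on C^k \<otimes> H.\<close>
definition block_psd :: "nat \<Rightarrow> (nat \<Rightarrow> nat \<Rightarrow> complex^'n^'n) \<Rightarrow> bool" where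
  "block_psd k M \<longleftrightarrow> (\<forall>v :: nat \<Rightarrow> complex^'n.
      let q = (\<Sum>a<k. \<Sum>b<k. cinner (v a) (M a b *v v b)) in Im q = 0 \<and> Re q \<ge> 0)"

text \<open>Complete positivity: id_k \<otimes> E is positive for every k (id_k \<otimes> E acts blockwise).\<close>
definition completely_positive :: "(complex^'a^'a \<Rightarrow> complex^'b^'b) \<Rightarrow> bool" where
  "completely_positive E \<longleftrightarrow> clinear_map E \<and>
     (\<forall>k M. block_psd k M \<longrightarrow> block_psd k (\<lambda>a b. E (M a b)))"

definition trace_nonincreasing :: "(complex^'a^'a \<Rightarrow> complex^'b^'b) \<Rightarrow> bool" where
  "trace_nonincreasing E \<longleftrightarrow> (\<forall>X. psd X \<longrightarrow> Re (trace (E X)) \<le> Re (trace X))"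

definition free_ops :: "(complex^'a^'a) set \<Rightarrow> (complex^'b^'b) set
     \<Rightarrow> (complex^'a^'a \<Rightarrow> complex^'b^'b) set" where
  "free_ops F F' = {E. completely_positive E \<and> trace_nonincreasing E \<and>
      (\<forall>\<sigma>\<in>F. \<exists>\<sigma>'\<in>F'. \<exists>p::real. 0 \<le> p \<and> p \<le> 1 \<and> E \<sigma> = p *\<^sub>R \<sigma>')}"

definition prob_transformable :: "(complex^'a^'a) set \<Rightarrow> (complex^'b^'b) set
     \<Rightarrow> complex^'a^'a \<Rightarrow> complex^'b^'b \<Rightarrow> bool" where
  "prob_transformable F F' \<rho> \<rho>' \<longleftrightarrow>
     \<rho>' \<in> closure {(1 / Re (trace (E \<rho>))) *\<^sub>R E \<rho> | E. E \<in> free_ops F F' \<and> Re (trace (E \<rho>)) > 0}"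

end

theory Submission
  imports Defs
begin

text \<open>
  Suppose \<open>\<rho>' \<le> l\<sigma>'\<close> and \<open>\<sigma>' \<le> m\<rho>'\<close> for a free state \<open>\<sigma>'\<close>, and \<open>\<Omega>\<^sub>F(\<rho>) > lm\<close>. Then
  \<open>(-\<rho>, lm \<rho>)\<close> lies outside the closed convex cone \<open>{(P + v, Q - v) | P, Q \<ge> 0, v \<in> span F}\<close>,
  and a separating functional yields positive \<open>A\<close>, \<open>B\<close> that agree on free states while, after
  adding a multiple of the identity, \<open>tr(A\<rho>) = lm tr(B\<rho>) > 0\<close>. The measure-and-prepare map
  \<open>X \<mapsto> tr(AX)/m (m\<rho>' - \<sigma>') + tr(BX) (l\<sigma>' - \<rho>')\<close>, suitably normalised, sends free states to
  multiples of \<open>\<sigma>'\<close> and \<open>\<rho>\<close> to a multiple of \<open>\<rho>'\<close>. Mixing \<open>\<rho>'\<close> with a little of \<open>\<sigma>'\<close> pushes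
  the product \<open>lm\<close> strictly below \<open>\<Omega>\<^sub>F(\<rho>)\<close> (or makes it finite when \<open>\<Omega>\<^sub>F(\<rho>) = \<infinity>\<close>), which
  gives cases (i) and (ii) up to closure; if \<open>\<Omega>\<^sub>F(\<rho>) = 1\<close>, then \<open>\<rho>'\<close> is itself free. In case
  (iii), \<open>\<rho>\<close> is not supported inside the common support of the free states, so measuring along a
  vector in their common kernel and preparing \<open>\<rho>'\<close> is a free operation that succeeds on \<open>\<rho>\<close>.
\<close>

section \<open>Hermitian and positive semidefinite matrices\<close>

definition qform :: "complex^'n^'n \<Rightarrow> complex^'n \<Rightarrow> complex" where
  "qform M x = cinner x (M *v x)"

definition outer :: "complex^'n \<Rightarrow> complex^'n^'n" where
  "outer t = (\<chi> i j. t$i * cnj (t$j))"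

definition hermitian :: "complex^'n^'n \<Rightarrow> bool" where
  "hermitian M \<longleftrightarrow> (\<forall>i j. M$i$j = cnj (M$j$i))"

lemma cinner_add_right: "cinner x (y + z) = cinner x y + cinner x z"
  by (simp add: cinner_def sum.distrib algebra_simps)

lemma cinner_add_left: "cinner (x + y) z = cinner x z + cinner y z"
  by (simp add: cinner_def sum.distrib algebra_simps)

lemma cinner_diff_right: "cinner x (y - z) = cinner x y - cinner x z"
  by (simp add: cinner_def sum_subtractf algebra_simps)

lemma cinner_scalar_mult_right: "cinner x (c *s y) = c * cinner x y"
  by (simp add: cinner_def sum_distrib_left algebra_simps)

lemma cinner_scalar_mult_left: "cinner (c *s x) y = cnj c * cinner x y"
  by (simp add: cinner_def sum_distrib_left algebra_simps)

lemma scaleR_eq_scalar_mult: "(c::real) *\<^sub>R (x::complex^'n) = of_real c *s x"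
  by (simp add: vec_eq_iff) (simp add: scaleR_conv_of_real)

lemma cinner_scaleR_right: "cinner x ((c::real) *\<^sub>R y) = of_real c * cinner x y"
  by (simp add: scaleR_eq_scalar_mult cinner_scalar_mult_right)

lemma cinner_sum_right: "cinner x (\<Sum>k\<in>K. f k) = (\<Sum>k\<in>K. cinner x (f k))"
  unfolding cinner_def by (simp add: sum_component sum_distrib_left) (rule sum.swap)

lemma cinner_zero_right [simp]: "cinner x 0 = 0"
  by (simp add: cinner_def)

lemma cinner_commute: "cinner y x = cnj (cinner x y)"
  by (simp add: cinner_def mult.commute)

lemma cinner_self_Re: "Re (cinner x x) = (norm x)\<^sup>2"
proof -
  have "Re (cinner x x) = (\<Sum>i\<in>UNIV. (cmod (x$i))\<^sup>2)"
    unfolding cinner_def Re_sum by (intro sum.cong refl) (subst cmod_power2, simp add: power2_eq_square)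
  then show ?thesis by (simp add: norm_vec_def L2_set_def sum_nonneg)
qed

lemma cinner_self_Im [simp]: "Im (cinner x x) = 0"
  by (simp add: cinner_def Im_sum mult.commute)

lemma cinner_self_eq_0_iff: "cinner x x = 0 \<longleftrightarrow> x = 0"
proof
  assume "cinner x x = 0"
  then have "Re (cinner x x) = 0" by simp
  then show "x = 0" by (simp add: cinner_self_Re)
qed (simp add: cinner_def)

lemma cinner_axis_left: "cinner (axis i 1) y = y $ i"
  unfolding cinner_def axis_def
  by (simp add: if_distrib[of cnj] if_distrib[of "\<lambda>z. z * _"] cong: if_cong)

lemma cinner_axis_right: "cinner x (axis i 1) = cnj (x $ i)"
  unfolding cinner_def axis_def by (simp add: if_distrib[of "\<lambda>z. _ * z"] cong: if_cong)

lemma matrix_vector_mult_axis: "((M::complex^'n^'n) *v axis j 1) $ i = M$i$j"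
  by (simp add: matrix_vector_mult_def axis_def if_distrib cong: if_cong)

lemma scaleR_matrix_nth: "((c::real) *\<^sub>R (M::complex^'n^'n))$i$j = of_real c * M$i$j"
  by (simp only: vector_scaleR_component scaleR_conv_of_real[where 'a=complex])

lemma matrix_vector_mult_scaleR_left: "(c *\<^sub>R M) *v x = c *\<^sub>R ((M::complex^'n^'n) *v x)"
  unfolding matrix_vector_mult_def vec_eq_iff scaleR_matrix_nth vector_scaleR_component vec_lambda_beta
  by (simp add: sum_distrib_left scaleR_conv_of_real[where 'a=complex] mult.assoc)

lemma matrix_vector_mult_cscale: "(cscale c M) *v x = c *s ((M::complex^'n^'n) *v x)"
  by (simp add: cscale_def matrix_vector_mult_def vec_eq_iff sum_distrib_left algebra_simps)

lemma matrix_vector_mult_sum_left: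
  "(\<Sum>k\<in>K. (M k::complex^'n^'n)) *v x = (\<Sum>k\<in>K. M k *v x)"
  by (induction K rule: infinite_finite_induct) (auto simp: matrix_vector_mult_add_rdistrib)

lemma outer_matrix_vector_mult: "outer t *v y = cinner t y *s t"
  by (simp add: outer_def matrix_vector_mult_def vec_eq_iff cinner_def sum_distrib_left algebra_simps)

lemma hermitian_iff: "hermitian M \<longleftrightarrow> (\<forall>i j. cnj (M$j$i) = M$i$j)"
  unfolding hermitian_def by (metis complex_cnj_cnj)

lemma hermitian_cinner_swap:
  assumes "hermitian M"
  shows "cinner x (M *v y) = cnj (cinner y (M *v x))"
proof -
  have "cinner x (M *v y) = (\<Sum>i\<in>UNIV. \<Sum>j\<in>UNIV. cnj (x$i) * M$i$j * y$j)"
    unfolding cinner_def matrix_vector_mult_def by (simp add: sum_distrib_left mult.assoc)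
  also have "\<dots> = (\<Sum>j\<in>UNIV. \<Sum>i\<in>UNIV. cnj (x$i) * M$i$j * y$j)" by (rule sum.swap)
  also have "\<dots> = (\<Sum>j\<in>UNIV. \<Sum>i\<in>UNIV. cnj (cnj (y$j) * M$j$i * x$i))"
  proof (intro sum.cong refl)
    fix i j
    have "cnj (M$j$i) = M$i$j" using assms unfolding hermitian_iff by blast
    then show "cnj (x$i) * M$i$j * y$j = cnj (cnj (y$j) * M$j$i * x$i)" by (simp add: mult_ac)
  qed
  also have "\<dots> = cnj (cinner y (M *v x))"
    unfolding cinner_def matrix_vector_mult_def by (simp add: sum_distrib_left mult.assoc)
  finally show ?thesis .
qed

lemma hermitian_qform_real: "hermitian M \<Longrightarrow> Im (qform M x) = 0"
  using hermitian_cinner_swap[of M x x] by (simp add: qform_def complex_eq_iff)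

lemma psd_iff_qform: "psd M \<longleftrightarrow> (\<forall>x. Im (qform M x) = 0 \<and> Re (qform M x) \<ge> 0)"
  by (simp add: psd_def qform_def)

lemma cinner_expand_form:
  "cinner (x + t *s y) (M *v (x + t *s y)) =
     cinner x (M *v x) + t * cinner x (M *v y) + cnj t * cinner y (M *v x) + cnj t * t * cinner y (M *v y)"
  by (simp add: matrix_vector_right_distrib vector_scalar_commute cinner_add_left cinner_add_right
      cinner_scalar_mult_left cinner_scalar_mult_right algebra_simps)

text \<open>Polarization with \<open>x + y\<close> and \<open>x + i y\<close>.\<close>

lemma psd_hermitian:
  assumes "psd M"
  shows "hermitian M"
proof -
  have real: "Im (cinner z (M *v z)) = 0" for z using assms by (simp add: psd_def)
  have swap: "cinner x (M *v y) = cnj (cinner y (M *v x))" for x y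
  proof -
    define u where "u = cinner x (M *v y)"
    define w where "w = cinner y (M *v x)"
    have one: "Im (cinner x (M *v x) + 1 * u + cnj 1 * w + cnj 1 * 1 * cinner y (M *v y)) = 0"
      using real[of "x + 1 *s y"] unfolding cinner_expand_form u_def w_def .
    have i: "Im (cinner x (M *v x) + \<i> * u + cnj \<i> * w + cnj \<i> * \<i> * cinner y (M *v y)) = 0"
      using real[of "x + \<i> *s y"] unfolding cinner_expand_form u_def w_def .
    have "Im (u + w) = 0" using one real[of x] real[of y] by simp
    moreover have "Re u - Re w = 0" using i real[of x] real[of y] by simp
    ultimately show ?thesis by (simp add: u_def w_def complex_eq_iff)
  qed
  show ?thesis
    unfolding hermitian_def
  proof (intro allI)
    fix i j
    show "M$i$j = cnj (M$j$i)"
      using swap[of "axis i 1" "axis j 1"] by (simp add: cinner_axis_left matrix_vector_mult_axis)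
  qed
qed

lemma psd_iff_hermitian: "psd M \<longleftrightarrow> hermitian M \<and> (\<forall>x. Re (qform M x) \<ge> 0)"
  using psd_hermitian hermitian_qform_real psd_iff_qform by blast

lemma hermitian_diff: "hermitian A \<Longrightarrow> hermitian B \<Longrightarrow> hermitian (A - B)"
  by (simp add: hermitian_iff)

lemma hermitian_scaleR: "hermitian A \<Longrightarrow> hermitian (c *\<^sub>R A)"
  by (simp add: hermitian_iff scaleR_matrix_nth)

lemma hermitian_outer: "hermitian (outer t)"
  by (simp add: hermitian_iff outer_def mult.commute)

lemma qform_add: "qform (A + B) x = qform A x + qform B x"
  by (simp add: qform_def matrix_vector_mult_add_rdistrib cinner_add_right)

lemma qform_diff: "qform (A - B) x = qform A x - qform B x"
  by (simp add: qform_def matrix_vector_mult_diff_rdistrib cinner_diff_right)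

lemma qform_scaleR: "qform (c *\<^sub>R A) x = of_real c * qform A x"
  by (simp add: qform_def matrix_vector_mult_scaleR_left cinner_scaleR_right)

lemma qform_sum: "qform (\<Sum>k\<in>K. B k) x = (\<Sum>k\<in>K. qform (B k) x)"
  by (simp add: qform_def matrix_vector_mult_sum_left cinner_sum_right)

lemma qform_outer: "qform (outer t) x = of_real ((cmod (cinner t x))\<^sup>2)"
proof -
  have "qform (outer t) x = cinner t x * cnj (cinner t x)"
    by (simp add: qform_def outer_matrix_vector_mult cinner_scalar_mult_right cinner_commute[of x t])
  then show ?thesis by (simp add: complex_norm_square[symmetric])
qed

lemma qform_axis: "qform M (axis i 1) = M$i$i"
  by (simp add: qform_def cinner_axis_left matrix_vector_mult_axis)

lemma psd_add: "psd A \<Longrightarrow> psd B \<Longrightarrow> psd (A + B)"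
  by (simp add: psd_iff_qform qform_add)

lemma psd_scaleR: "psd A \<Longrightarrow> c \<ge> 0 \<Longrightarrow> psd (c *\<^sub>R A)"
  by (simp add: psd_iff_qform qform_scaleR)

lemma psd_zero: "psd 0"
  by (simp add: psd_def cinner_def)

lemma psd_outer: "psd (outer t)"
  by (simp add: psd_iff_qform qform_outer)

lemma psd_mat1: "psd (mat 1 :: complex^'n^'n)"
  by (simp add: psd_iff_qform qform_def cinner_self_Re)

lemma quadratic_nonneg_imp_le:
  fixes a c n :: real
  assumes "\<And>s. a - 2 * s * n + s\<^sup>2 * n * c \<ge> 0" and "c \<ge> 0" and "n \<ge> 0"
  shows "n \<le> a * c"
proof (cases "c > 0")
  case True
  have "a - 2 * (1/c) * n + (1/c)\<^sup>2 * n * c \<ge> 0" by (rule assms(1))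
  then show ?thesis using True by (simp add: power2_eq_square field_simps)
next
  case False
  then have "c = 0" using assms(2) by simp
  have "n = 0"
  proof (rule ccontr)
    assume "n \<noteq> 0"
    then have "n > 0" using assms(3) by simp
    moreover have "a - 2 * ((a+1)/(2*n)) * n + ((a+1)/(2*n))\<^sup>2 * n * c \<ge> 0" by (rule assms(1))
    ultimately show False using \<open>c = 0\<close> by (simp add: field_simps)
  qed
  then show ?thesis using \<open>c = 0\<close> by simp
qed

lemma psd_cauchy_schwarz:
  assumes "psd M"
  shows "(cmod (cinner x (M *v y)))\<^sup>2 \<le> Re (qform M x) * Re (qform M y)"
proof -
  have h: "hermitian M" using assms psd_hermitian by blast
  define u where "u = cinner x (M *v y)"
  define a where "a = Re (qform M x)"
  define c where "c = Re (qform M y)"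
  define n where "n = (cmod u)\<^sup>2"
  have c0: "c \<ge> 0" using assms by (simp add: psd_iff_qform c_def)
  have n0: "n \<ge> 0" by (simp add: n_def)
  have uu: "u * cnj u = of_real n" using complex_norm_square[of u] by (simp add: n_def)
  have key: "a - 2 * s * n + s\<^sup>2 * n * c \<ge> 0" for s :: real
  proof -
    define t where "t = - (of_real s * cnj u)"
    have "qform M (x + t *s y) = of_real a + t * u + cnj t * cnj u + cnj t * t * of_real c"
      unfolding qform_def cinner_expand_form u_def
      using hermitian_qform_real[OF h, of x] hermitian_qform_real[OF h, of y]
        hermitian_cinner_swap[OF h, of y x]
      by (simp add: qform_def a_def c_def complex_eq_iff)
    also have "\<dots> = of_real (a - 2 * s * n + s\<^sup>2 * n * c)"
      by (simp add: t_def algebra_simps power2_eq_square uu[symmetric])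
    finally have "Re (qform M (x + t *s y)) = a - 2 * s * n + s\<^sup>2 * n * c" by simp
    moreover have "Re (qform M (x + t *s y)) \<ge> 0" using assms by (simp add: psd_iff_qform)
    ultimately show ?thesis by simp
  qed
  show ?thesis using quadratic_nonneg_imp_le[OF key c0 n0] by (simp add: n_def u_def a_def c_def)
qed

lemma psd_qform_eq_0_imp_kernel:
  assumes "psd M" and "Re (qform M x) = 0"
  shows "M *v x = 0"
  using psd_cauchy_schwarz[OF assms(1), of "M *v x" x] assms(2)
  by (simp add: cinner_self_eq_0_iff)

lemma psd_diag:
  assumes "psd M"
  shows "Re (M$i$i) \<ge> 0 \<and> Im (M$i$i) = 0"
proof -
  have "Im (qform M (axis i 1)) = 0 \<and> Re (qform M (axis i 1)) \<ge> 0" using assms by (simp add: psd_iff_qform)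
  then show ?thesis by (simp add: qform_axis)
qed

lemma psd_trace_nonneg: "psd M \<Longrightarrow> Re (trace M) \<ge> 0"
  by (simp add: trace_def Re_sum psd_diag sum_nonneg)

lemma psd_trace_real: "psd M \<Longrightarrow> trace M = of_real (Re (trace M))"
  by (simp add: trace_def Im_sum psd_diag complex_eq_iff)

lemma psd_diag_le_trace: "psd M \<Longrightarrow> Re (M$i$i) \<le> Re (trace M)"
  unfolding trace_def Re_sum by (rule member_le_sum) (auto simp: psd_diag)

lemma matrix_eq_0_if_columns_0:
  assumes "\<And>i. (M::complex^'n^'n) *v axis i 1 = 0"
  shows "M = 0"
  using assms matrix_vector_mult_axis[of M] by (simp add: vec_eq_iff)

lemma psd_trace_eq_0:
  assumes "psd M" and "trace M = 0"
  shows "M = 0"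
proof (rule matrix_eq_0_if_columns_0)
  fix i
  have "(\<Sum>i\<in>UNIV. Re (M$i$i)) = 0" using assms(2) by (simp add: trace_def Re_sum[symmetric])
  then have "Re (M$i$i) = 0"
    using sum_nonneg_eq_0_iff[of UNIV "\<lambda>i. Re (M$i$i)"] psd_diag[OF assms(1)] by auto
  then show "M *v axis i 1 = 0" by (simp add: psd_qform_eq_0_imp_kernel[OF assms(1)] qform_axis)
qed

lemma psd_entry_bound:
  assumes "psd M"
  shows "cmod (M$i$j) \<le> Re (trace M)"
proof -
  have "(cmod (M$i$j))\<^sup>2 \<le> Re (M$i$i) * Re (M$j$j)"
    using psd_cauchy_schwarz[OF assms, of "axis i 1" "axis j 1"]
    by (simp add: cinner_axis_left matrix_vector_mult_axis qform_axis)
  also have "\<dots> \<le> (Re (trace M))\<^sup>2"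
    unfolding power2_eq_square
    using psd_diag[OF assms, of i] psd_diag[OF assms, of j]
      psd_diag_le_trace[OF assms, of i] psd_diag_le_trace[OF assms, of j]
    by (intro mult_mono) auto
  finally show ?thesis using psd_trace_nonneg[OF assms] by (rule power2_le_imp_le)
qed

lemma norm_vec_le_sum: "norm (x::'a::real_normed_vector^'n) \<le> (\<Sum>i\<in>UNIV. norm (x$i))"
  unfolding norm_vec_def by (rule L2_set_le_sum) simp

lemma psd_norm_le_trace:
  assumes "psd (M::complex^'n^'n)"
  shows "norm M \<le> real CARD('n)^2 * Re (trace M)"
proof -
  have "norm M \<le> (\<Sum>i\<in>UNIV. norm (M$i))" by (rule norm_vec_le_sum)
  also have "\<dots> \<le> (\<Sum>i\<in>(UNIV::'n set). \<Sum>j\<in>(UNIV::'n set). Re (trace M))"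
  proof (rule sum_mono)
    fix i
    have "norm (M$i) \<le> (\<Sum>j\<in>UNIV. norm (M$i$j))" by (rule norm_vec_le_sum)
    also have "\<dots> \<le> (\<Sum>j\<in>(UNIV::'n set). Re (trace M))"
      by (rule sum_mono) (simp add: psd_entry_bound[OF assms])
    finally show "norm (M$i) \<le> (\<Sum>j\<in>(UNIV::'n set). Re (trace M))" .
  qed
  also have "\<dots> = real CARD('n)^2 * Re (trace M)" by (simp add: power2_eq_square)
  finally show ?thesis .
qed

lemma Re_trace_le_norm: "Re (trace (M::complex^'n^'n)) \<le> real CARD('n) * norm M"
proof -
  have "Re (M$i$i) \<le> norm M" for i
  proof -
    have "Re (M$i$i) \<le> norm (M$i$i)" by (rule complex_Re_le_cmod)
    also have "\<dots> \<le> norm (M$i)" by (rule Finite_Cartesian_Product.norm_nth_le)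
    also have "\<dots> \<le> norm M" by (rule Finite_Cartesian_Product.norm_nth_le)
    finally show ?thesis .
  qed
  then have "(\<Sum>i\<in>UNIV. Re (M$i$i)) \<le> (\<Sum>i\<in>(UNIV::'n set). norm M)" by (intro sum_mono)
  then show ?thesis by (simp add: trace_def Re_sum)
qed

lemma psd_norm_le_norm_add:
  assumes "psd (P::complex^'n^'n)" and "psd Q"
  shows "norm P \<le> real CARD('n)^3 * norm (P + Q)"
proof -
  have "norm P \<le> real CARD('n)^2 * Re (trace P)" by (rule psd_norm_le_trace[OF assms(1)])
  also have "\<dots> \<le> real CARD('n)^2 * Re (trace (P + Q))"
    using psd_trace_nonneg[OF assms(2)] by (simp add: trace_add)
  also have "\<dots> \<le> real CARD('n)^2 * (real CARD('n) * norm (P + Q))"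
    by (intro mult_left_mono Re_trace_le_norm) simp
  also have "\<dots> = real CARD('n)^3 * norm (P + Q)" by (simp add: power2_eq_square power3_eq_cube)
  finally show ?thesis .
qed

lemma closed_psd: "closed {M :: complex^'n^'n. psd M}"
  unfolding closed_sequential_limits
proof (intro allI impI, elim conjE)
  fix P and P0 :: "complex^'n^'n"
  assume psd: "\<forall>n. P n \<in> {M. psd M}" and lim: "P \<longlonglongrightarrow> P0"
  have "Im (qform P0 x) = 0 \<and> Re (qform P0 x) \<ge> 0" for x
  proof -
    have "(\<lambda>n. P n $ i $ j) \<longlonglongrightarrow> P0 $ i $ j" for i j by (intro tendsto_vec_nth lim)
    then have "(\<lambda>n. \<Sum>i\<in>UNIV. cnj (x$i) * (\<Sum>j\<in>UNIV. P n$i$j * x$j))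
        \<longlonglongrightarrow> (\<Sum>i\<in>UNIV. cnj (x$i) * (\<Sum>j\<in>UNIV. P0$i$j * x$j))"
      by (intro tendsto_sum tendsto_mult_left tendsto_mult_right)
    then have q: "(\<lambda>n. qform (P n) x) \<longlonglongrightarrow> qform P0 x"
      by (simp add: qform_def cinner_def matrix_vector_mult_def)
    have "Im (qform (P n) x) = 0" and "Re (qform (P n) x) \<ge> 0" for n
      using psd by (simp_all add: psd_iff_qform)
    then show ?thesis
      using tendsto_Im[OF q] tendsto_Re[OF q] by (simp add: LIMSEQ_const_iff LIMSEQ_le_const)
  qed
  then show "P0 \<in> {M. psd M}" by (simp add: psd_iff_qform)
qed

section \<open>Rank-one decompositions and the trace pairing\<close>

lemma outer_scaleR: "outer ((c::real) *\<^sub>R g) = c\<^sup>2 *\<^sub>R outer g"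
  by (simp add: outer_def vec_eq_iff scaleR_matrix_nth scaleR_conv_of_real[where 'a=complex]
      power2_eq_square mult_ac)

lemma psd_eliminate_column:
  assumes "psd G" and "Re (G$j$j) > 0"
  defines "g \<equiv> G *v axis j 1" and "d \<equiv> Re (G$j$j)"
  defines "G' \<equiv> G - (1/d) *\<^sub>R outer g"
  shows "psd G'" and "G' *v axis j 1 = 0"
    and "\<And>i. G *v axis i 1 = 0 \<Longrightarrow> G' *v axis i 1 = 0"
proof -
  have h: "hermitian G" using assms(1) psd_hermitian by blast
  have d: "d > 0" using assms(2) by (simp add: d_def)
  have Gjj: "G$j$j = of_real d" using psd_diag[OF assms(1), of j] by (simp add: d_def complex_eq_iff)
  have cg: "cinner g (axis i 1) = cnj (G$i$j)" for i
    by (simp add: cinner_axis_right g_def matrix_vector_mult_axis)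
  have G'v: "G' *v v = G *v v - (1/d) *\<^sub>R (cinner g v *s g)" for v
    by (simp add: G'_def matrix_vector_mult_diff_rdistrib matrix_vector_mult_scaleR_left
        outer_matrix_vector_mult)
  have "Re (qform G' x) \<ge> 0" for x
  proof -
    have "cmod (cinner g x) = cmod (cinner x (G *v axis j 1))"
      by (simp add: g_def cinner_commute[of "G *v axis j 1" x])
    then have "(cmod (cinner g x))\<^sup>2 \<le> Re (qform G x) * d"
      using psd_cauchy_schwarz[OF assms(1), of x "axis j 1"] by (simp add: qform_axis d_def)
    moreover have "Re (qform G' x) = Re (qform G x) - (1/d) * (cmod (cinner g x))\<^sup>2"
      by (simp add: G'_def qform_diff qform_scaleR qform_outer)
    ultimately have "d * Re (qform G' x) \<ge> 0" using d by (simp add: field_simps)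
    then show ?thesis using d by (simp add: zero_le_mult_iff)
  qed
  moreover have "hermitian G'"
    unfolding G'_def by (intro hermitian_diff hermitian_scaleR hermitian_outer h)
  ultimately show "psd G'" using psd_iff_hermitian by blast
  have "cinner g (axis j 1) = of_real d" using cg[of j] Gjj by simp
  then have "G' *v axis j 1 = g - (1/d) *\<^sub>R (d *\<^sub>R g)"
    using G'v[of "axis j 1"] by (simp only: g_def[symmetric] scaleR_eq_scalar_mult)
  then show "G' *v axis j 1 = 0" using d by simp
  fix i
  assume Gi: "G *v axis i 1 = 0"
  then have "G$j$i = 0" using matrix_vector_mult_axis[of G i j] by simp
  moreover have "G$i$j = cnj (G$j$i)" using h unfolding hermitian_def by blast
  ultimately have "G$i$j = 0" by simp
  then show "G' *v axis i 1 = 0" by (simp add: G'v Gi cg)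
qed

lemma psd_sum_outer_on:
  fixes J :: "'n::finite set"
  assumes "finite J" and "psd (G::complex^'n^'n)" and "\<And>i. i \<notin> J \<Longrightarrow> G *v axis i 1 = 0"
  shows "\<exists>(m::nat) ts. G = (\<Sum>k<m. outer (ts k))"
  using assms
proof (induction J arbitrary: G rule: finite_induct)
  case empty
  then have "G = 0" using matrix_eq_0_if_columns_0 by blast
  then show ?case by (intro exI[of _ "0::nat"]) simp
next
  case (insert j J)
  show ?case
  proof (cases "Re (G$j$j) = 0")
    case True
    then have "G *v axis j 1 = 0"
      using psd_qform_eq_0_imp_kernel[OF insert.prems(1)] by (simp add: qform_axis)
    then have "G *v axis i 1 = 0" if "i \<notin> J" for i using insert.prems(2) that by (cases "i = j") auto
    then show ?thesis using insert.IH[OF insert.prems(1)] by blast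
  next
    case False
    then have pos: "Re (G$j$j) > 0" using psd_diag[OF insert.prems(1), of j] by simp
    define d where "d = Re (G$j$j)"
    define g where "g = G *v axis j 1"
    define G' where "G' = G - (1/d) *\<^sub>R outer g"
    note elim = psd_eliminate_column[OF insert.prems(1) pos, folded d_def g_def, folded G'_def]
    have "G' *v axis i 1 = 0" if "i \<notin> J" for i
      using elim(2,3) insert.prems(2) that by (cases "i = j") auto
    then obtain m :: nat and ts where G': "G' = (\<Sum>k<m. outer (ts k))"
      using insert.IH[OF elim(1)] by blast
    have "G = (\<Sum>k<m. outer (ts k)) + outer (sqrt (1/d) *\<^sub>R g)"
      using pos by (simp add: G'[symmetric] G'_def outer_scaleR d_def)
    also have "\<dots> = (\<Sum>k<Suc m. outer ((ts(m := sqrt (1/d) *\<^sub>R g)) k))"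
      by simp
    finally show ?thesis by blast
  qed
qed

lemma psd_sum_outer:
  assumes "psd (G::complex^'n^'n)"
  obtains m :: nat and ts where "G = (\<Sum>k<m. outer (ts k))"
  using psd_sum_outer_on[of UNIV G] assms by auto

lemma trace_zero [simp]: "trace (0::'a::semiring_1^'n^'n) = 0"
  by (simp add: trace_def)

lemma trace_scaleR: "trace ((c::real) *\<^sub>R (A::complex^'n^'n)) = of_real c * trace A"
  by (simp only: trace_def scaleR_matrix_nth) (simp add: sum_distrib_left)

lemma trace_cscale: "trace (cscale c (A::complex^'n^'n)) = c * trace A"
  by (simp add: trace_def cscale_def sum_distrib_left)

lemma trace_sum: "trace (\<Sum>k\<in>K. (B k::complex^'n^'n)) = (\<Sum>k\<in>K. trace (B k))"
  by (induction K rule: infinite_finite_induct) (simp_all add: trace_add)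

lemma trace_outer: "trace (outer x) = cinner x x"
  by (simp add: trace_def outer_def cinner_def mult.commute)

lemma trace_mult_eq_sum: "trace ((A::complex^'n^'n) ** X) = (\<Sum>i\<in>UNIV. \<Sum>j\<in>UNIV. A$i$j * X$j$i)"
  by (simp add: trace_def matrix_matrix_mult_def)

lemma trace_mult_add_left: "trace ((A + B) ** (X::complex^'n^'n)) = trace (A ** X) + trace (B ** X)"
  by (simp add: trace_mult_eq_sum sum.distrib algebra_simps)

lemma trace_mult_add_right: "trace (A ** ((X::complex^'n^'n) + Y)) = trace (A ** X) + trace (A ** Y)"
  by (simp add: trace_mult_eq_sum sum.distrib algebra_simps)

lemma trace_mult_scaleR_left:
  "trace (((c::real) *\<^sub>R A) ** (X::complex^'n^'n)) = of_real c * trace (A ** X)"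
  by (simp only: trace_mult_eq_sum scaleR_matrix_nth) (simp add: sum_distrib_left mult.assoc)

lemma trace_mult_cscale_right: "trace (A ** cscale c (X::complex^'n^'n)) = c * trace (A ** X)"
  by (simp add: trace_mult_eq_sum cscale_def sum_distrib_left mult.left_commute)

lemma trace_mult_sum_left:
  "trace ((\<Sum>k\<in>K. B k) ** (X::complex^'n^'n)) = (\<Sum>k\<in>K. trace (B k ** X))"
  by (induction K rule: infinite_finite_induct) (simp_all add: trace_mult_add_left)

lemma trace_outer_mult: "trace (outer a ** (X::complex^'n^'n)) = qform X a"
proof -
  have "trace (outer a ** X) = (\<Sum>j\<in>UNIV. \<Sum>i\<in>UNIV. a$i * cnj (a$j) * X$j$i)"
    by (simp add: trace_mult_eq_sum outer_def) (rule sum.swap)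
  also have "\<dots> = qform X a"
    unfolding qform_def cinner_def matrix_vector_mult_def by (simp add: sum_distrib_left mult_ac)
  finally show ?thesis .
qed

lemma cinner_cauchy_schwarz: "(cmod (cinner x y))\<^sup>2 \<le> Re (cinner x x) * Re (cinner y y)"
  using psd_cauchy_schwarz[OF psd_mat1, of x y] by (simp add: qform_def)

lemma qform_le_trace:
  assumes "psd (X::complex^'n^'n)"
  shows "Re (qform X a) \<le> Re (trace X) * Re (cinner a a)"
proof -
  obtain m :: nat and xs where X: "X = (\<Sum>k<m. outer (xs k))" using psd_sum_outer[OF assms] by blast
  have "Re (qform X a) = (\<Sum>k<m. (cmod (cinner (xs k) a))\<^sup>2)"
    by (simp add: X qform_sum qform_outer Re_sum)
  also have "\<dots> \<le> (\<Sum>k<m. Re (cinner (xs k) (xs k)) * Re (cinner a a))"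
    by (intro sum_mono cinner_cauchy_schwarz)
  also have "\<dots> = Re (trace X) * Re (cinner a a)"
    by (simp add: X trace_sum trace_outer Re_sum sum_distrib_right)
  finally show ?thesis .
qed

lemma trace_mult_psd:
  assumes A: "psd (A::complex^'n^'n)" and X: "psd X"
  shows "trace (A ** X) = of_real (Re (trace (A ** X)))"
    and "Re (trace (A ** X)) \<ge> 0"
    and "Re (trace (A ** X)) \<le> Re (trace A) * Re (trace X)"
proof -
  obtain m :: nat and as where A_eq: "A = (\<Sum>k<m. outer (as k))" using psd_sum_outer[OF A] by blast
  have tr: "trace (A ** X) = (\<Sum>k<m. qform X (as k))"
    by (simp add: A_eq trace_mult_sum_left trace_outer_mult)
  show "trace (A ** X) = of_real (Re (trace (A ** X)))"
    using X by (simp add: tr Im_sum psd_iff_qform complex_eq_iff)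
  show "Re (trace (A ** X)) \<ge> 0" using X by (simp add: tr Re_sum psd_iff_qform sum_nonneg)
  have "Re (trace (A ** X)) \<le> (\<Sum>k<m. Re (trace X) * Re (cinner (as k) (as k)))"
    unfolding tr Re_sum by (intro sum_mono qform_le_trace[OF X])
  also have "\<dots> = Re (trace A) * Re (trace X)"
    by (simp add: A_eq trace_sum trace_outer Re_sum sum_distrib_left mult.commute)
  finally show "Re (trace (A ** X)) \<le> Re (trace A) * Re (trace X)" .
qed

section \<open>Measure-and-prepare maps\<close>

definition prepare :: "complex^'a^'a \<Rightarrow> complex^'b^'b \<Rightarrow> complex^'a^'a \<Rightarrow> complex^'b^'b" where
  "prepare A T X = cscale (trace (A ** X)) T"

lemma trace_prepare: "trace (prepare A T X) = trace (A ** X) * trace T"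
  by (simp add: prepare_def trace_cscale)

lemma prepare_of_real: "trace (A ** X) = of_real x \<Longrightarrow> prepare A T X = x *\<^sub>R T"
  by (simp only: prepare_def cscale_def vec_eq_iff scaleR_matrix_nth) simp

lemma trace_prepare_le:
  assumes "psd A" and "psd T" and "psd X"
  shows "Re (trace (prepare A T X)) \<le> Re (trace A) * Re (trace T) * Re (trace X)"
proof -
  have "Re (trace (prepare A T X)) = Re (trace (A ** X)) * Re (trace T)"
    using trace_mult_psd(1)[OF assms(1,3)] psd_trace_real[OF assms(2)]
    by (simp add: trace_prepare complex_eq_iff)
  also have "\<dots> \<le> Re (trace A) * Re (trace X) * Re (trace T)"
    using trace_mult_psd(3)[OF assms(1,3)] psd_trace_nonneg[OF assms(2)] by (rule mult_right_mono)
  finally show ?thesis by (simp add: mult_ac)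
qed

lemma cinner_prepare_sum_outer:
  "cinner u (prepare (\<Sum>p<m1. outer (as p)) (\<Sum>r<m2. outer (ts r)) M *v v) =
     (\<Sum>p<m1. \<Sum>r<m2. cinner (cinner (ts r) u *s as p) (M *v (cinner (ts r) v *s as p)))"
proof -
  have "cinner u (prepare (\<Sum>p<m1. outer (as p)) (\<Sum>r<m2. outer (ts r)) M *v v) =
      (\<Sum>p<m1. qform M (as p)) * (\<Sum>r<m2. cinner (ts r) v * cinner u (ts r))"
    by (simp add: prepare_def matrix_vector_mult_cscale cinner_scalar_mult_right trace_mult_sum_left
        trace_outer_mult matrix_vector_mult_sum_left outer_matrix_vector_mult cinner_sum_right)
  also have "\<dots> = (\<Sum>p<m1. \<Sum>r<m2. cinner (cinner (ts r) u *s as p) (M *v (cinner (ts r) v *s as p)))"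
    unfolding sum_product
    by (intro sum.cong refl)
      (simp add: qform_def vector_scalar_commute cinner_scalar_mult_left cinner_scalar_mult_right
        cinner_commute[of u] mult_ac)
  finally show ?thesis .
qed

lemma sum_swap_nested:
  "(\<Sum>a\<in>A. \<Sum>b\<in>B. \<Sum>p\<in>P. \<Sum>r\<in>R. f a b p r) = (\<Sum>p\<in>P. \<Sum>r\<in>R. \<Sum>a\<in>A. \<Sum>b\<in>B. f a b p r)"
proof -
  have "(\<Sum>a\<in>A. \<Sum>b\<in>B. \<Sum>p\<in>P. \<Sum>r\<in>R. f a b p r) = (\<Sum>p\<in>P. \<Sum>a\<in>A. \<Sum>b\<in>B. \<Sum>r\<in>R. f a b p r)"
    by (subst sum.swap) (rule sum.cong[OF refl], rule sum.swap)
  also have "\<dots> = (\<Sum>p\<in>P. \<Sum>r\<in>R. \<Sum>a\<in>A. \<Sum>b\<in>B. f a b p r)"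
    by (rule sum.cong[OF refl], subst sum.swap) (rule sum.cong[OF refl], rule sum.swap)
  finally show ?thesis .
qed

text \<open>With \<open>A = \<Sum> |a\<^sub>p\<rangle>\<langle>a\<^sub>p|\<close> and \<open>T = \<Sum> |t\<^sub>r\<rangle>\<langle>t\<^sub>r|\<close>, the block form of \<open>prepare A T\<close> at
  \<open>(v\<^sub>a)\<close> is the sum over \<open>p, r\<close> of the block forms of \<open>M\<close> at \<open>(\<langle>t\<^sub>r, v\<^sub>a\<rangle> a\<^sub>p)\<close>.\<close>

lemma completely_positive_prepare:
  fixes A :: "complex^'a^'a" and T :: "complex^'b^'b"
  assumes "psd A" and "psd T"
  shows "completely_positive (prepare A T)"
  unfolding completely_positive_def
proof (intro conjI allI impI)
  show "clinear_map (prepare A T)"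
    unfolding clinear_map_def prepare_def
    by (simp add: trace_mult_add_right trace_mult_cscale_right) (simp add: cscale_def vec_eq_iff algebra_simps)
  fix k and M :: "nat \<Rightarrow> nat \<Rightarrow> complex^'a^'a"
  assume M: "block_psd k M"
  obtain m1 :: nat and as where A_eq: "A = (\<Sum>p<m1. outer (as p))" using psd_sum_outer[OF assms(1)] by blast
  obtain m2 :: nat and ts where T_eq: "T = (\<Sum>r<m2. outer (ts r))" using psd_sum_outer[OF assms(2)] by blast
  show "block_psd k (\<lambda>a b. prepare A T (M a b))"
    unfolding block_psd_def Let_def
  proof
    fix v :: "nat \<Rightarrow> complex^'b"
    define Q where "Q p r = (\<Sum>a<k. \<Sum>b<k. cinner (cinner (ts r) (v a) *s as p)
      (M a b *v (cinner (ts r) (v b) *s as p)))" for p r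
    have Q: "Im (Q p r) = 0 \<and> Re (Q p r) \<ge> 0" for p r
      using M[unfolded block_psd_def Let_def, rule_format, of "\<lambda>a. cinner (ts r) (v a) *s as p"]
      by (simp add: Q_def)
    have "(\<Sum>a<k. \<Sum>b<k. cinner (v a) (prepare A T (M a b) *v v b)) = (\<Sum>p<m1. \<Sum>r<m2. Q p r)"
      unfolding A_eq T_eq cinner_prepare_sum_outer Q_def
      by (rule sum_swap_nested)
    then show "Im (\<Sum>a<k. \<Sum>b<k. cinner (v a) (prepare A T (M a b) *v v b)) = 0 \<and>
        Re (\<Sum>a<k. \<Sum>b<k. cinner (v a) (prepare A T (M a b) *v v b)) \<ge> 0"
      by (simp add: Im_sum Re_sum Q sum_nonneg)
  qed
qed

lemma completely_positive_add:
  assumes "completely_positive (E1::complex^'a^'a \<Rightarrow> complex^'b^'b)" and "completely_positive E2"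
  shows "completely_positive (\<lambda>X. E1 X + E2 X)"
  unfolding completely_positive_def
proof (intro conjI allI impI)
  show "clinear_map (\<lambda>X. E1 X + E2 X)"
    using assms unfolding completely_positive_def clinear_map_def
    by (simp add: cscale_def vec_eq_iff algebra_simps)
  fix k and M :: "nat \<Rightarrow> nat \<Rightarrow> complex^'a^'a"
  assume "block_psd k M"
  then have "block_psd k (\<lambda>a b. E1 (M a b))" and "block_psd k (\<lambda>a b. E2 (M a b))"
    using assms unfolding completely_positive_def by blast+
  then show "block_psd k (\<lambda>a b. E1 (M a b) + E2 (M a b))"
    by (simp add: block_psd_def Let_def matrix_vector_mult_add_rdistrib cinner_add_right sum.distrib)
qed

section \<open>Max-relative entropy and the robustness measures\<close>

lemma density_opsD: "\<rho> \<in> density_ops \<Longrightarrow> psd \<rho> \<and> trace \<rho> = 1"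
  by (simp add: density_ops_def)

lemma affine_free_set_density_ops: "affine_free_set F \<Longrightarrow> F \<subseteq> density_ops"
  unfolding affine_free_set_def by blast

lemma loewner_le_scaleR_imp_ge_1:
  assumes "\<rho> \<in> density_ops" and "\<sigma> \<in> density_ops" and "loewner_le \<rho> (l *\<^sub>R \<sigma>)"
  shows "l \<ge> 1"
proof -
  have "Re (trace (l *\<^sub>R \<sigma> - \<rho>)) \<ge> 0"
    using assms(3) psd_trace_nonneg by (simp add: loewner_le_def)
  then show ?thesis using assms(1,2) by (simp add: trace_sub trace_scaleR density_opsD)
qed

lemma Rmax_ge_1:
  assumes "\<rho> \<in> density_ops" and "\<sigma> \<in> density_ops"
  shows "Rmax \<rho> \<sigma> \<ge> 1"
  unfolding Rmax_def using loewner_le_scaleR_imp_ge_1[OF assms] by (auto intro!: Inf_greatest)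

lemma Rmax_pos:
  assumes "\<rho> \<in> density_ops" and "\<sigma> \<in> density_ops"
  shows "Rmax \<rho> \<sigma> > 0"
proof -
  have "(0::ereal) < 1" by simp
  then show ?thesis using Rmax_ge_1[OF assms] by (rule less_le_trans)
qed

lemma Rmax_le: "loewner_le X (l *\<^sub>R Y) \<Longrightarrow> Rmax X Y \<le> ereal l"
  unfolding Rmax_def by (rule Inf_lower) blast

lemma Rmax_attained:
  assumes "X \<in> density_ops" and "Y \<in> density_ops" and "Rmax X Y \<noteq> \<infinity>"
  obtains l where "Rmax X Y = ereal l" and "loewner_le X (l *\<^sub>R Y)"
proof -
  define L where "L = {l. loewner_le X (l *\<^sub>R Y)}"
  have R: "Rmax X Y = (INF l\<in>L. ereal l)"
    unfolding Rmax_def L_def by (rule arg_cong[where f = Inf]) blast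
  have "L \<noteq> {}" using assms(3) by (auto simp: R top_ereal_def)
  moreover have "bdd_below L"
    using loewner_le_scaleR_imp_ge_1[OF assms(1,2)] by (auto simp: L_def intro!: bdd_belowI[where m = 1])
  moreover have "closed L"
  proof -
    have "closed ((\<lambda>l. l *\<^sub>R Y - X) -` {M. psd M})"
      by (intro continuous_closed_vimage closed_psd continuous_intros)
    moreover have "L = (\<lambda>l. l *\<^sub>R Y - X) -` {M. psd M}" by (auto simp: L_def loewner_le_def)
    ultimately show ?thesis by simp
  qed
  ultimately have "Inf L \<in> L" and "ereal (Inf L) = Rmax X Y"
    by (simp_all add: closed_contains_Inf ereal_Inf' R)
  then show thesis by (intro that[of "Inf L"]) (simp_all add: L_def)
qed

lemma OmegaF_le_Rmax_product: "\<sigma> \<in> F \<Longrightarrow> OmegaF F \<rho> \<le> Rmax \<rho> \<sigma> * Rmax \<sigma> \<rho>"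
  unfolding OmegaF_def by (rule INF_lower)

lemma OmegaF_ge_1:
  assumes "F \<subseteq> density_ops" and "\<rho> \<in> density_ops"
  shows "OmegaF F \<rho> \<ge> 1"
  unfolding OmegaF_def
proof (rule INF_greatest)
  fix \<sigma> assume "\<sigma> \<in> F"
  then have \<sigma>: "\<sigma> \<in> density_ops" using assms(1) by blast
  have "(1::ereal) * 1 \<le> Rmax \<rho> \<sigma> * Rmax \<sigma> \<rho>"
    using Rmax_ge_1[OF assms(2) \<sigma>] Rmax_ge_1[OF \<sigma> assms(2)] Rmax_pos[OF assms(2) \<sigma>]
    by (intro ereal_mult_mono) auto
  then show "1 \<le> Rmax \<rho> \<sigma> * Rmax \<sigma> \<rho>" by simp
qed

lemma OmegaF_le:
  assumes "F \<subseteq> density_ops" and "\<sigma> \<in> F" and "\<rho> \<in> density_ops"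
    and "loewner_le \<rho> (l *\<^sub>R \<sigma>)" and "loewner_le \<sigma> (m *\<^sub>R \<rho>)"
  shows "OmegaF F \<rho> \<le> ereal (l * m)"
proof -
  have \<sigma>: "\<sigma> \<in> density_ops" using assms(1,2) by blast
  have "OmegaF F \<rho> \<le> Rmax \<rho> \<sigma> * Rmax \<sigma> \<rho>" by (rule OmegaF_le_Rmax_product[OF assms(2)])
  also have "\<dots> \<le> ereal l * ereal m"
    using Rmax_le[OF assms(4)] Rmax_le[OF assms(5)] Rmax_pos[OF \<sigma> assms(3)]
      loewner_le_scaleR_imp_ge_1[OF assms(3) \<sigma> assms(4)]
    by (intro ereal_mult_mono) auto
  finally show ?thesis by simp
qed

lemma OmegaF_less_witness:
  assumes "F \<subseteq> density_ops" and "\<rho> \<in> density_ops" and "OmegaF F \<rho> < ereal c"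
  shows "\<exists>\<sigma>\<in>F. \<exists>l m. loewner_le \<rho> (l *\<^sub>R \<sigma>) \<and> loewner_le \<sigma> (m *\<^sub>R \<rho>) \<and> l * m < c"
proof -
  obtain \<sigma> where \<sigma>F: "\<sigma> \<in> F" and lt: "Rmax \<rho> \<sigma> * Rmax \<sigma> \<rho> < ereal c"
    using assms(3) unfolding OmegaF_def by (auto simp: INF_less_iff)
  have \<sigma>: "\<sigma> \<in> density_ops" using assms(1) \<sigma>F by blast
  have "Rmax \<rho> \<sigma> > 0" and "Rmax \<sigma> \<rho> > 0" using Rmax_pos assms(2) \<sigma> by auto
  then have "Rmax \<rho> \<sigma> \<noteq> \<infinity>" and "Rmax \<sigma> \<rho> \<noteq> \<infinity>" using lt by (auto split: if_split_asm)
  then obtain l m where "Rmax \<rho> \<sigma> = ereal l" "loewner_le \<rho> (l *\<^sub>R \<sigma>)"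
    and "Rmax \<sigma> \<rho> = ereal m" "loewner_le \<sigma> (m *\<^sub>R \<rho>)"
    using Rmax_attained assms(2) \<sigma> by metis
  then show ?thesis using \<sigma>F lt by auto
qed

lemma RF_le: "\<sigma> \<in> F \<Longrightarrow> loewner_le \<rho> (l *\<^sub>R \<sigma>) \<Longrightarrow> RF F \<rho> \<le> ereal l"
  unfolding RF_def by (rule INF_lower2) (auto intro: Rmax_le)

lemma RF_less_top_witness:
  assumes "RF F \<rho> < \<infinity>"
  shows "\<exists>\<sigma>\<in>F. \<exists>l. loewner_le \<rho> (l *\<^sub>R \<sigma>)"
proof -
  have "(INF \<sigma>\<in>F. Rmax \<rho> \<sigma>) < \<infinity>" using assms by (simp add: RF_def)
  then obtain \<sigma> where "\<sigma> \<in> F" and "Rmax \<rho> \<sigma> < \<infinity>" using INF_less_iff[THEN iffD1] by blast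
  moreover have "{ereal l |l. loewner_le \<rho> (l *\<^sub>R \<sigma>)} \<noteq> {}"
  proof
    assume "{ereal l |l. loewner_le \<rho> (l *\<^sub>R \<sigma>)} = {}"
    then have "Rmax \<rho> \<sigma> = \<infinity>" by (simp add: Rmax_def top_ereal_def)
    with \<open>Rmax \<rho> \<sigma> < \<infinity>\<close> show False by simp
  qed
  ultimately show ?thesis by blast
qed

section \<open>Conic duality\<close>

lemma separating_hyperplane_convex_cone:
  fixes z :: "'a::{real_inner,heine_borel}"
  assumes "convex_cone S" and "closed S" and "z \<notin> S"
  obtains a where "inner a z < 0" and "\<And>x. x \<in> S \<Longrightarrow> inner a x \<ge> 0"
proof -
  have "convex S" using assms(1) by (simp add: convex_cone_def)
  then obtain a b where az: "inner a z < b" and aS: "\<forall>x\<in>S. b < inner a x"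
    using separating_hyperplane_closed_point[OF _ assms(2,3)] by blast
  have b: "b < 0" using aS assms(1) by (auto simp: convex_cone_iff)
  have nonneg: "inner a x \<ge> 0" if x: "x \<in> S" for x
  proof (rule ccontr)
    assume "\<not> inner a x \<ge> 0"
    then have neg: "inner a x < 0" by simp
    then have "(b / inner a x) *\<^sub>R x \<in> S"
      using b x assms(1) by (simp add: convex_cone_iff divide_nonpos_neg less_imp_le)
    then have "b < inner a ((b / inner a x) *\<^sub>R x)" using aS by blast
    then show False using neg by simp
  qed
  show thesis by (rule that[of a]) (use az b nonneg in auto)
qed

definition separation_cone :: "(complex^'n^'n) set \<Rightarrow> ((complex^'n^'n) \<times> (complex^'n^'n)) set" where
  "separation_cone F = {(P + v, Q - v) | P Q v. psd P \<and> psd Q \<and> v \<in> span F}"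

lemma separation_coneI: "psd P \<Longrightarrow> psd Q \<Longrightarrow> v \<in> span F \<Longrightarrow> (P + v, Q - v) \<in> separation_cone F"
  unfolding separation_cone_def by blast

lemma separation_coneE:
  assumes "x \<in> separation_cone F"
  obtains P Q v where "psd P" "psd Q" "v \<in> span F" "x = (P + v, Q - v)"
  using assms unfolding separation_cone_def by blast

lemma convex_cone_separation_cone: "convex_cone (separation_cone F)"
  unfolding convex_cone_iff
proof (intro conjI ballI allI impI)
  show "0 \<in> separation_cone F"
    using separation_coneI[OF psd_zero psd_zero span_zero, of F] by (simp add: zero_prod_def)
next
  fix x y assume "x \<in> separation_cone F" and "y \<in> separation_cone F"
  then obtain P1 Q1 v1 P2 Q2 v2 where "psd P1" "psd Q1" "v1 \<in> span F" "x = (P1 + v1, Q1 - v1)"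
    and "psd P2" "psd Q2" "v2 \<in> span F" "y = (P2 + v2, Q2 - v2)"
    by (metis separation_coneE)
  then show "x + y \<in> separation_cone F"
    using separation_coneI[of "P1 + P2" "Q1 + Q2" "v1 + v2" F]
    by (simp add: psd_add span_add algebra_simps)
next
  fix x and c :: real assume "x \<in> separation_cone F" and "c \<ge> 0"
  then obtain P Q v where "psd P" "psd Q" "v \<in> span F" "x = (P + v, Q - v)"
    by (metis separation_coneE)
  then show "c *\<^sub>R x \<in> separation_cone F"
    using separation_coneI[of "c *\<^sub>R P" "c *\<^sub>R Q" "c *\<^sub>R v" F] \<open>c \<ge> 0\<close>
    by (simp add: psd_scaleR span_scale scaleR_add_right scaleR_diff_right)
qed

text \<open>The positive parts of a decomposition are controlled by their sum, which is the sum of the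
  two coordinates; this a priori bound makes the cone closed.\<close>

lemma norm_separation_decomposition_le:
  fixes P Q v :: "complex^'n^'n"
  assumes "psd P" and "psd Q"
  shows "norm (P, Q, v) \<le> (6 * real CARD('n)^3 + 1) * norm (P + v, Q - v)"
proof -
  define C where "C = real CARD('n)^3"
  define x where "x = norm (P + v, Q - v)"
  have Pv: "norm (P + v) \<le> x" and Qv: "norm (Q - v) \<le> x"
    unfolding x_def by (rule norm_fst_le, rule norm_snd_le)
  have "P + Q = (P + v) + (Q - v)" by simp
  then have "norm (P + Q) \<le> 2 * x" using norm_triangle_ineq[of "P + v" "Q - v"] Pv Qv by simp
  then have "C * norm (P + Q) \<le> 2 * (C * x)" by (simp add: C_def mult_left_mono)
  moreover have "norm P \<le> C * norm (P + Q)" and "norm Q \<le> C * norm (P + Q)"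
    using psd_norm_le_norm_add[OF assms] psd_norm_le_norm_add[OF assms(2,1)]
    by (simp_all add: C_def add.commute)
  ultimately have P: "norm P \<le> 2 * (C * x)" and Q: "norm Q \<le> 2 * (C * x)" by linarith+
  have "v = (P + v) - P" by simp
  then have v: "norm v \<le> x + 2 * (C * x)" using norm_triangle_ineq4[of "P + v" P] Pv P by simp
  have "norm (P, Q, v) \<le> norm P + (norm Q + norm v)"
    using norm_Pair_le[of P "(Q, v)"] norm_Pair_le[of Q v] by simp
  also have "\<dots> \<le> 6 * (C * x) + x" using P Q v by linarith
  finally show ?thesis by (simp add: C_def x_def algebra_simps)
qed

lemma closed_image_if_norm_le:
  fixes f :: "'a::{heine_borel,real_normed_vector} \<Rightarrow> 'b::real_normed_vector"
  assumes "closed T" and "continuous_on UNIV f" and "\<And>t. t \<in> T \<Longrightarrow> norm t \<le> C * norm (f t)"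
  shows "closed (f ` T)"
  unfolding closed_sequential_limits
proof (intro allI impI, elim conjE)
  fix y l assume y: "\<forall>n. y n \<in> f ` T" and yl: "y \<longlonglongrightarrow> l"
  have "\<forall>n. \<exists>s. s \<in> T \<and> y n = f s" using y by blast
  then have "\<exists>t. \<forall>n. t n \<in> T \<and> y n = f (t n)" by (rule choice)
  then obtain t where t: "\<forall>n. t n \<in> T \<and> y n = f (t n)" by blast
  obtain K where K: "\<And>n. norm (y n) \<le> K"
    using convergent_imp_bounded[OF yl] unfolding bounded_iff by auto
  have "norm (t n) \<le> \<bar>C\<bar> * K" for n
  proof -
    have "norm (t n) \<le> C * norm (y n)" using t assms(3) by simp
    also have "\<dots> \<le> \<bar>C\<bar> * norm (y n)" by (simp add: mult_right_mono)
    also have "\<dots> \<le> \<bar>C\<bar> * K" using K[of n] by (simp add: mult_left_mono)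
    finally show ?thesis .
  qed
  then have "bounded (range t)" unfolding bounded_iff by blast
  then obtain r t0 where r: "strict_mono r" and lim: "(t \<circ> r) \<longlonglongrightarrow> t0"
    using bounded_imp_convergent_subsequence by blast
  have "t0 \<in> T"
    using closed_sequential_limits[THEN iffD1, OF assms(1), rule_format, of "t \<circ> r" t0] t lim by simp
  moreover have "l = f t0"
  proof (rule LIMSEQ_unique)
    show "(y \<circ> r) \<longlonglongrightarrow> l" by (rule LIMSEQ_subseq_LIMSEQ[OF yl r])
    have "((f \<circ> (t \<circ> r)) \<longlonglongrightarrow> f t0)"
      using continuous_on_tendsto_compose[OF assms(2) lim] by (simp add: o_def)
    then show "(y \<circ> r) \<longlonglongrightarrow> f t0" using t by (simp add: o_def)
  qed
  ultimately show "l \<in> f ` T" by simp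
qed

lemma closed_separation_cone: "closed (separation_cone (F :: (complex^'n^'n) set))"
proof -
  define f :: "(complex^'n^'n) \<times> (complex^'n^'n) \<times> (complex^'n^'n) \<Rightarrow> _"
    where "f t = (fst t + snd (snd t), fst (snd t) - snd (snd t))" for t
  define T where "T = {M :: complex^'n^'n. psd M} \<times> {M :: complex^'n^'n. psd M} \<times> span F"
  have "separation_cone F = f ` T"
    unfolding separation_cone_def f_def T_def by force
  moreover have "closed (f ` T)"
  proof (rule closed_image_if_norm_le)
    show "closed T" unfolding T_def by (intro closed_Times closed_psd closed_subspace subspace_span)
    show "continuous_on UNIV f" unfolding f_def by (intro continuous_intros)
    show "norm t \<le> (6 * real CARD('n)^3 + 1) * norm (f t)" if "t \<in> T" for t
      using that norm_separation_decomposition_le[of "fst t" "fst (snd t)" "snd (snd t)"]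
      by (auto simp: T_def f_def)
  qed
  ultimately show ?thesis by simp
qed

text \<open>This is where the affineness of the theory enters.\<close>

lemma affine_free_set_span_density_ops:
  assumes "affine_free_set F" and "x \<in> span F" and "x \<in> density_ops"
  shows "x \<in> F"
proof -
  obtain t r where t: "finite t" "t \<subseteq> F" and x: "x = (\<Sum>a\<in>t. r a *\<^sub>R a)"
    using assms(2) unfolding span_explicit by blast
  have "F \<subseteq> density_ops" using assms(1) by (rule affine_free_set_density_ops)
  then have "trace x = of_real (\<Sum>a\<in>t. r a)"
    using t by (auto simp: x trace_sum trace_scaleR density_opsD subset_iff intro!: sum.cong)
  then have "(of_real (\<Sum>a\<in>t. r a) :: complex) = 1" using assms(3) density_opsD by metis
  then have "(\<Sum>a\<in>t. r a) = 1" by (simp only: of_real_eq_1_iff)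
  then have "x \<in> affine hull F"
    unfolding affine_hull_explicit using t x by (intro CollectI exI[of _ t] exI[of _ r]) auto
  then show ?thesis using assms(1,3) unfolding affine_free_set_def by blast
qed

text \<open>A decomposition \<open>-\<rho> = P + v\<close>, \<open>\<pi>\<rho> = Q - v\<close> would make \<open>-v = \<rho> + P\<close> a multiple \<open>t\<sigma>\<close>
  of a free state with \<open>\<rho> \<le> t\<sigma> \<le> \<pi>\<rho>\<close>, so that \<open>\<Omega>\<^sub>F(\<rho>) \<le> \<pi>\<close>.\<close>

lemma point_notin_separation_cone:
  assumes "affine_free_set F" and "\<rho> \<in> density_ops" and "OmegaF F \<rho> > ereal \<pi>"
  shows "(- \<rho>, \<pi> *\<^sub>R \<rho>) \<notin> separation_cone F"
proof
  assume "(- \<rho>, \<pi> *\<^sub>R \<rho>) \<in> separation_cone F"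
  then obtain P Q v where P: "psd P" and Q: "psd Q" and v: "v \<in> span F"
    and eq1: "- \<rho> = P + v" and eq2: "\<pi> *\<^sub>R \<rho> = Q - v"
    by (auto elim: separation_coneE)
  have \<rho>: "psd \<rho>" "trace \<rho> = 1" using assms(2) by (simp_all add: density_opsD)
  define s where "s = \<rho> + P"
  define t where "t = Re (trace s)"
  have "v = - \<rho> - P" using eq1 by simp
  then have s: "s = - v" by (simp add: s_def)
  have ps: "psd s" unfolding s_def by (intro psd_add \<rho>(1) P)
  have t: "t \<ge> 1" using psd_trace_nonneg[OF P] \<rho>(2) by (simp add: t_def s_def trace_add)
  define \<sigma> where "\<sigma> = (1/t) *\<^sub>R s"
  have s\<sigma>: "s = t *\<^sub>R \<sigma>" using t by (simp add: \<sigma>_def)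
  have "trace s = of_real t" using psd_trace_real[OF ps] by (simp add: t_def)
  then have "\<sigma> \<in> density_ops"
    using t ps by (simp add: density_ops_def \<sigma>_def psd_scaleR trace_scaleR)
  moreover have "\<sigma> \<in> span F" using v by (simp add: \<sigma>_def s span_scale span_neg)
  ultimately have \<sigma>F: "\<sigma> \<in> F" using affine_free_set_span_density_ops[OF assms(1)] by blast
  have le1: "loewner_le \<rho> (t *\<^sub>R \<sigma>)" using P by (simp add: loewner_le_def s\<sigma>[symmetric] s_def)
  have "(\<pi> / t) *\<^sub>R \<rho> - \<sigma> = (1/t) *\<^sub>R (\<pi> *\<^sub>R \<rho> + v)"
    by (simp add: \<sigma>_def s scaleR_add_right)
  also have "\<pi> *\<^sub>R \<rho> + v = Q" using eq2 by (simp add: algebra_simps)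
  finally have le2: "loewner_le \<sigma> ((\<pi> / t) *\<^sub>R \<rho>)"
    using t Q by (simp add: loewner_le_def psd_scaleR)
  have "OmegaF F \<rho> \<le> ereal (t * (\<pi> / t))"
    using OmegaF_le[OF affine_free_set_density_ops[OF assms(1)] \<sigma>F assms(2) le1 le2] .
  then show False using assms(3) t by simp
qed

definition herm_part :: "complex^'n^'n \<Rightarrow> complex^'n^'n" where
  "herm_part Y = (\<chi> i j. (Y$i$j + cnj (Y$j$i)) / 2)"

lemma trace_herm_part_mult:
  assumes "hermitian X"
  shows "trace (herm_part Y ** X) = of_real (Y \<bullet> X)"
proof -
  have hx: "X$j$i = cnj (X$i$j)" for i j using assms unfolding hermitian_def by blast
  define f where "f i j = Y$i$j * cnj (X$i$j)" for i j
  define g where "g i j = cnj (Y$i$j) * X$i$j" for i j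
  have "herm_part Y$i$j * X$j$i = (f i j + g j i) / 2" for i j
    by (simp add: herm_part_def f_def g_def hx[of j i] distrib_right)
  then have "trace (herm_part Y ** X) = (\<Sum>i\<in>UNIV. \<Sum>j\<in>UNIV. (f i j + g j i) / 2)"
    unfolding trace_mult_eq_sum by (simp only:)
  also have "\<dots> = ((\<Sum>i\<in>UNIV. \<Sum>j\<in>UNIV. f i j) + (\<Sum>i\<in>UNIV. \<Sum>j\<in>UNIV. g j i)) / 2"
    by (simp only: sum_divide_distrib[symmetric] sum.distrib)
  also have "(\<Sum>i\<in>UNIV. \<Sum>j\<in>UNIV. g j i) = (\<Sum>i\<in>UNIV. \<Sum>j\<in>UNIV. g i j)"
    by (rule sum.swap)
  also have "((\<Sum>i\<in>UNIV. \<Sum>j\<in>UNIV. f i j) + (\<Sum>i\<in>UNIV. \<Sum>j\<in>UNIV. g i j)) / 2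
      = (\<Sum>i\<in>UNIV. \<Sum>j\<in>UNIV. (f i j + g i j) / 2)"
    by (simp only: sum_divide_distrib[symmetric] sum.distrib)
  also have "\<dots> = (\<Sum>i\<in>UNIV. \<Sum>j\<in>UNIV. of_real (Re (Y$i$j) * Re (X$i$j) + Im (Y$i$j) * Im (X$i$j)))"
    by (intro sum.cong refl) (simp add: f_def g_def complex_eq_iff)
  also have "\<dots> = of_real (Y \<bullet> X)"
    by (simp add: inner_vec_def inner_complex_def of_real_sum)
  finally show ?thesis .
qed

lemma psd_herm_part:
  assumes "\<And>P. psd P \<Longrightarrow> Y \<bullet> P \<ge> 0"
  shows "psd (herm_part Y)"
proof -
  have "Re (qform (herm_part Y) x) \<ge> 0" for x
  proof -
    have "qform (herm_part Y) x = trace (herm_part Y ** outer x)"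
      by (subst trace_mul_sym) (simp add: trace_outer_mult)
    then show ?thesis using assms[OF psd_outer[of x]] by (simp add: trace_herm_part_mult hermitian_outer)
  qed
  moreover have "hermitian (herm_part Y)"
    by (simp add: hermitian_iff herm_part_def add.commute)
  ultimately show ?thesis using psd_iff_hermitian by blast
qed

text \<open>The separating functional \<open>(Y, Z)\<close> is nonnegative on both positive cones and takes the
  same value on \<open>(v, -v)\<close> for \<open>v\<close> in the span of \<open>F\<close>; its hermitian parts are \<open>A\<close> and \<open>B\<close>.\<close>

lemma OmegaF_gt_separating_pair:
  assumes "affine_free_set F" and "\<rho> \<in> density_ops" and "OmegaF F \<rho> > ereal \<pi>"
  obtains A B where "psd A" and "psd B" and "\<And>\<sigma>. \<sigma> \<in> F \<Longrightarrow> trace (A ** \<sigma>) = trace (B ** \<sigma>)"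
    and "Re (trace (A ** \<rho>)) > \<pi> * Re (trace (B ** \<rho>))"
proof -
  obtain a where az: "inner a (- \<rho>, \<pi> *\<^sub>R \<rho>) < 0" and aS: "\<And>x. x \<in> separation_cone F \<Longrightarrow> inner a x \<ge> 0"
    using separating_hyperplane_convex_cone[OF convex_cone_separation_cone closed_separation_cone
        point_notin_separation_cone[OF assms]] by blast
  obtain Y Z where a: "a = (Y, Z)" by fastforce
  have "Y \<bullet> P \<ge> 0" if "psd P" for P
    using aS[OF separation_coneI[OF that psd_zero span_zero]] by (simp add: a)
  then have A: "psd (herm_part Y)" by (rule psd_herm_part)
  have "Z \<bullet> Q \<ge> 0" if "psd Q" for Q
    using aS[OF separation_coneI[OF psd_zero that span_zero]] by (simp add: a)
  then have B: "psd (herm_part Z)" by (rule psd_herm_part)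
  have YZ: "Y \<bullet> v = Z \<bullet> v" if "v \<in> span F" for v
    using aS[OF separation_coneI[OF psd_zero psd_zero that]]
      aS[OF separation_coneI[OF psd_zero psd_zero span_neg[OF that]]]
    by (simp add: a inner_diff_right)
  have herm: "hermitian \<sigma>" if "\<sigma> \<in> density_ops" for \<sigma>
    using that by (simp add: density_opsD psd_hermitian)
  show thesis
  proof (rule that[OF A B])
    fix \<sigma> assume \<sigma>F: "\<sigma> \<in> F"
    then have "hermitian \<sigma>" using herm affine_free_set_density_ops[OF assms(1)] by blast
    moreover have "Y \<bullet> \<sigma> = Z \<bullet> \<sigma>" using YZ span_base[OF \<sigma>F] by blast
    ultimately show "trace (herm_part Y ** \<sigma>) = trace (herm_part Z ** \<sigma>)"
      by (simp add: trace_herm_part_mult)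
  next
    show "Re (trace (herm_part Y ** \<rho>)) > \<pi> * Re (trace (herm_part Z ** \<rho>))"
      using az herm[OF assms(2)] by (simp add: a trace_herm_part_mult)
  qed
qed

section \<open>Reachable states\<close>

definition reachable :: "(complex^'a^'a) set \<Rightarrow> (complex^'b^'b) set \<Rightarrow> complex^'a^'a \<Rightarrow> complex^'b^'b \<Rightarrow> bool" where
  "reachable F F' \<rho> \<rho>' \<longleftrightarrow>
     (\<exists>E\<in>free_ops F F'. Re (trace (E \<rho>)) > 0 \<and> (1 / Re (trace (E \<rho>))) *\<^sub>R E \<rho> = \<rho>')"

lemma prob_transformable_iff_closure_reachable:
  "prob_transformable F F' \<rho> \<rho>' \<longleftrightarrow> \<rho>' \<in> closure (Collect (reachable F F' \<rho>))"
proof -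
  have "{(1 / Re (trace (E \<rho>))) *\<^sub>R E \<rho> | E. E \<in> free_ops F F' \<and> Re (trace (E \<rho>)) > 0} =
      Collect (reachable F F' \<rho>)"
    unfolding reachable_def by blast
  then show ?thesis unfolding prob_transformable_def by simp
qed

lemma reachableI:
  assumes "E \<in> free_ops F F'" and "E \<rho> = \<kappa> *\<^sub>R \<rho>'" and "\<kappa> > 0" and "\<rho>' \<in> density_ops"
  shows "reachable F F' \<rho> \<rho>'"
proof -
  have "Re (trace (E \<rho>)) = \<kappa>" using assms(2,4) by (simp add: trace_scaleR density_opsD)
  then show ?thesis unfolding reachable_def using assms by (intro bexI[of _ E]) auto
qed

text \<open>The bound \<open>p \<le> 1\<close> in the definition of free operations is automatic for
  trace-non-increasing maps.\<close>

lemma free_opsI: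
  assumes "completely_positive E"
    and tn: "\<And>X. psd X \<Longrightarrow> Re (trace (E X)) \<le> Re (trace X)"
    and fr: "\<And>\<sigma>. \<sigma> \<in> F \<Longrightarrow> \<exists>\<sigma>'\<in>F'. \<exists>p \<ge> 0. E \<sigma> = p *\<^sub>R \<sigma>'"
    and "F \<subseteq> density_ops" and "F' \<subseteq> density_ops"
  shows "E \<in> free_ops F F'"
proof -
  have "\<exists>\<sigma>'\<in>F'. \<exists>p::real. 0 \<le> p \<and> p \<le> 1 \<and> E \<sigma> = p *\<^sub>R \<sigma>'" if \<sigma>: "\<sigma> \<in> F" for \<sigma>
  proof -
    obtain \<sigma>' p where \<sigma>': "\<sigma>' \<in> F'" "p \<ge> 0" "E \<sigma> = p *\<^sub>R \<sigma>'" using fr[OF \<sigma>] by blast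
    have "Re (trace (E \<sigma>)) = p" using \<sigma>' assms(5) by (auto simp: trace_scaleR density_opsD)
    moreover have "Re (trace (E \<sigma>)) \<le> 1" using tn[of \<sigma>] \<sigma> assms(4) by (auto simp: density_opsD)
    ultimately show ?thesis using \<sigma>' by blast
  qed
  then show ?thesis unfolding free_ops_def trace_nonincreasing_def using assms(1) tn by blast
qed

text \<open>Free states are reached by discarding the input and preparing them.\<close>

lemma reachable_free_state:
  assumes "F \<subseteq> density_ops" and "F' \<subseteq> density_ops" and "\<rho> \<in> density_ops" and "\<rho>' \<in> F'"
  shows "reachable F F' \<rho> \<rho>'"
proof -
  have \<rho>': "psd \<rho>'" "trace \<rho>' = 1" using assms(2,4) by (auto simp: density_opsD)
  have E: "prepare (mat 1) \<rho>' \<sigma> = 1 *\<^sub>R \<rho>'" if "\<sigma> \<in> density_ops" for \<sigma>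
    using that by (intro prepare_of_real) (simp add: density_opsD matrix_mul_lid)
  have "prepare (mat 1) \<rho>' \<in> free_ops F F'"
  proof (rule free_opsI[OF completely_positive_prepare[OF psd_mat1 \<rho>'(1)] _ _ assms(1,2)])
    show "Re (trace (prepare (mat 1) \<rho>' X)) \<le> Re (trace X)" for X
      by (simp add: trace_prepare \<rho>'(2) matrix_mul_lid)
    fix \<sigma> assume "\<sigma> \<in> F"
    then have "prepare (mat 1) \<rho>' \<sigma> = 1 *\<^sub>R \<rho>'" using E assms(1) by blast
    then show "\<exists>\<sigma>'\<in>F'. \<exists>p \<ge> 0. prepare (mat 1) \<rho>' \<sigma> = p *\<^sub>R \<sigma>'"
      using assms(4) by (intro bexI[of _ \<rho>'] exI[of _ 1]) auto
  qed
  moreover have "\<rho>' \<in> density_ops" using assms(2,4) by blast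
  ultimately show ?thesis
    using E[OF assms(3)] by (intro reachableI[where E = "prepare (mat 1) \<rho>'" and \<kappa> = 1]) simp_all
qed

text \<open>Shifting a separating pair by a multiple of the identity makes the ratio of the two
  expectations in \<open>\<rho>\<close> exactly \<open>\<pi>\<close>.\<close>

lemma OmegaF_gt_balanced_pair:
  assumes "affine_free_set F" and "\<rho> \<in> density_ops" and "OmegaF F \<rho> > ereal \<pi>" and "\<pi> > 1"
  obtains A B \<beta> where "psd A" and "psd B" and "\<And>\<sigma>. \<sigma> \<in> F \<Longrightarrow> trace (A ** \<sigma>) = trace (B ** \<sigma>)"
    and "trace (A ** \<rho>) = of_real (\<pi> * \<beta>)" and "trace (B ** \<rho>) = of_real \<beta>" and "\<beta> > 0"
proof -
  obtain A B where A: "psd A" and B: "psd B" and eq: "\<And>\<sigma>. \<sigma> \<in> F \<Longrightarrow> trace (A ** \<sigma>) = trace (B ** \<sigma>)"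
    and gt: "Re (trace (A ** \<rho>)) > \<pi> * Re (trace (B ** \<rho>))"
    using OmegaF_gt_separating_pair[OF assms(1-3)] by blast
  have \<rho>: "psd \<rho>" "trace \<rho> = 1" using assms(2) by (simp_all add: density_opsD)
  define a where "a = Re (trace (A ** \<rho>))"
  define b where "b = Re (trace (B ** \<rho>))"
  define s where "s = (a - \<pi> * b) / (\<pi> - 1)"
  have b: "b \<ge> 0" unfolding b_def by (rule trace_mult_psd(2)[OF B \<rho>(1)])
  have s: "s > 0" using gt assms(4) by (simp add: s_def a_def b_def)
  have as: "a + s = \<pi> * (b + s)"
    using assms(4) by (simp add: s_def field_simps)
  have shift: "trace ((M + s *\<^sub>R mat 1) ** X) = trace (M ** X) + of_real s * trace X"
    for M X :: "complex^'a^'a"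
    by (simp add: trace_mult_add_left trace_mult_scaleR_left matrix_mul_lid)
  show thesis
  proof (rule that)
    show "psd (A + s *\<^sub>R mat 1)" and "psd (B + s *\<^sub>R mat 1)"
      using s by (simp_all add: psd_add psd_scaleR psd_mat1 A B)
    show "trace ((A + s *\<^sub>R mat 1) ** \<sigma>) = trace ((B + s *\<^sub>R mat 1) ** \<sigma>)" if "\<sigma> \<in> F" for \<sigma>
      using eq[OF that] by (simp add: shift)
    show "trace ((A + s *\<^sub>R mat 1) ** \<rho>) = of_real (\<pi> * (b + s))"
      using trace_mult_psd(1)[OF A \<rho>(1)] by (simp add: shift \<rho>(2) as[symmetric] a_def)
    show "trace ((B + s *\<^sub>R mat 1) ** \<rho>) = of_real (b + s)"
      using trace_mult_psd(1)[OF B \<rho>(1)] by (simp add: shift \<rho>(2) b_def)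
    show "b + s > 0" using b s by simp
  qed
qed

lemma scaled_prepare_sum:
  fixes A1 A2 :: "complex^'a^'a" and T1 T2 :: "complex^'b^'b"
  assumes "psd A1" and "psd A2" and "psd T1" and "psd T2"
  defines "c \<equiv> 1 / (1 + Re (trace A1) * Re (trace T1) + Re (trace A2) * Re (trace T2))"
  shows "c > 0"
    and "completely_positive (\<lambda>X. prepare (c *\<^sub>R A1) T1 X + prepare (c *\<^sub>R A2) T2 X)"
    and "\<And>X. psd X \<Longrightarrow> Re (trace (prepare (c *\<^sub>R A1) T1 X + prepare (c *\<^sub>R A2) T2 X)) \<le> Re (trace X)"
proof -
  define D where "D = Re (trace A1) * Re (trace T1) + Re (trace A2) * Re (trace T2)"
  have "D \<ge> 0"
    unfolding D_def using psd_trace_nonneg[OF assms(1)] psd_trace_nonneg[OF assms(2)]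
      psd_trace_nonneg[OF assms(3)] psd_trace_nonneg[OF assms(4)] by simp
  then have c: "c > 0" and cD: "c * D \<le> 1" by (simp_all add: c_def D_def add.assoc)
  then show "c > 0" by simp
  show "completely_positive (\<lambda>X. prepare (c *\<^sub>R A1) T1 X + prepare (c *\<^sub>R A2) T2 X)"
    using c assms(1-4)
    by (intro completely_positive_add completely_positive_prepare psd_scaleR) simp_all
  fix X :: "complex^'a^'a" assume X: "psd X"
  have "Re (trace (prepare (c *\<^sub>R A1) T1 X + prepare (c *\<^sub>R A2) T2 X))
      \<le> Re (trace (c *\<^sub>R A1)) * Re (trace T1) * Re (trace X)
        + Re (trace (c *\<^sub>R A2)) * Re (trace T2) * Re (trace X)"
    unfolding trace_add plus_complex.sel using c assms(1-4) X
    by (intro add_mono trace_prepare_le psd_scaleR) simp_all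
  also have "\<dots> = (c * D) * Re (trace X)" by (simp add: D_def trace_scaleR algebra_simps)
  also have "\<dots> \<le> 1 * Re (trace X)" using cD psd_trace_nonneg[OF X] by (rule mult_right_mono)
  finally show "Re (trace (prepare (c *\<^sub>R A1) T1 X + prepare (c *\<^sub>R A2) T2 X)) \<le> Re (trace X)"
    by simp
qed

text \<open>\<open>E\<close> sends every free state to a multiple of \<open>\<sigma>'\<close> and \<open>\<rho>\<close> to a multiple of \<open>\<rho>'\<close>.\<close>

lemma reachable_of_balanced_pair:
  assumes F: "F \<subseteq> density_ops" and F': "F' \<subseteq> density_ops"
    and \<rho>': "\<rho>' \<in> density_ops" and \<sigma>': "\<sigma>' \<in> F'"
    and le1: "loewner_le \<rho>' (l *\<^sub>R \<sigma>')" and le2: "loewner_le \<sigma>' (m *\<^sub>R \<rho>')"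
    and A: "psd A" and B: "psd B" and eq: "\<And>\<sigma>. \<sigma> \<in> F \<Longrightarrow> trace (A ** \<sigma>) = trace (B ** \<sigma>)"
    and A\<rho>: "trace (A ** \<rho>) = of_real (l * m * \<beta>)" and B\<rho>: "trace (B ** \<rho>) = of_real \<beta>"
    and \<beta>: "\<beta> > 0" and lm: "l * m > 1"
  shows "reachable F F' \<rho> \<rho>'"
proof -
  have \<sigma>'_dens: "\<sigma>' \<in> density_ops" using F' \<sigma>' by blast
  have l: "l \<ge> 1" using loewner_le_scaleR_imp_ge_1[OF \<rho>' \<sigma>'_dens le1] .
  have m: "m \<ge> 1" using loewner_le_scaleR_imp_ge_1[OF \<sigma>'_dens \<rho>' le2] .
  define T1 where "T1 = m *\<^sub>R \<rho>' - \<sigma>'"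
  define T2 where "T2 = l *\<^sub>R \<sigma>' - \<rho>'"
  have T1: "psd T1" and T2: "psd T2" using le1 le2 by (simp_all add: T1_def T2_def loewner_le_def)
  have A': "psd ((1 / m) *\<^sub>R A)" using A m by (simp add: psd_scaleR)
  define c where "c = 1 / (1 + Re (trace ((1 / m) *\<^sub>R A)) * Re (trace T1) + Re (trace B) * Re (trace T2))"
  define E where "E X = prepare (c *\<^sub>R (1 / m) *\<^sub>R A) T1 X + prepare (c *\<^sub>R B) T2 X" for X
  note E = scaled_prepare_sum[OF A' B T1 T2, folded c_def, folded E_def]
  have E_form: "E X = (c * (x - y)) *\<^sub>R \<rho>' + (c * (y * l - x / m)) *\<^sub>R \<sigma>'"
    if "trace (A ** X) = of_real x" and "trace (B ** X) = of_real y" for X x y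
  proof -
    have "prepare (c *\<^sub>R (1 / m) *\<^sub>R A) T1 X = (c / m * x) *\<^sub>R T1"
      and "prepare (c *\<^sub>R B) T2 X = (c * y) *\<^sub>R T2"
      using that by (simp_all add: prepare_of_real trace_mult_scaleR_left)
    then have "E X = (c / m * x) *\<^sub>R T1 + (c * y) *\<^sub>R T2" by (simp add: E_def)
    then show ?thesis using m by (simp add: T1_def T2_def algebra_simps)
  qed
  have "E \<in> free_ops F F'"
  proof (rule free_opsI[OF E(2,3) _ F F'])
    fix \<sigma> assume "\<sigma> \<in> F"
    then have \<sigma>: "psd \<sigma>" using F by (auto simp: density_opsD)
    define y where "y = Re (trace (B ** \<sigma>))"
    have y: "y \<ge> 0" unfolding y_def by (rule trace_mult_psd(2)[OF B \<sigma>])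
    have "trace (B ** \<sigma>) = of_real y" and "trace (A ** \<sigma>) = of_real y"
      using trace_mult_psd(1)[OF B \<sigma>] eq[OF \<open>\<sigma> \<in> F\<close>] by (simp_all add: y_def)
    then have "E \<sigma> = (c * (y * l - y / m)) *\<^sub>R \<sigma>'" by (simp add: E_form)
    moreover have "c * (y * l - y / m) \<ge> 0"
    proof -
      have "1 / m \<le> l" using lm m by (simp add: divide_le_eq mult.commute)
      then have "y / m \<le> y * l" using mult_left_mono[of "1 / m" l y] y by simp
      then show ?thesis using E(1) by simp
    qed
    ultimately show "\<exists>\<sigma>''\<in>F'. \<exists>p \<ge> 0. E \<sigma> = p *\<^sub>R \<sigma>''" using \<sigma>' by blast
  qed
  moreover have "E \<rho> = (c * (l * m * \<beta> - \<beta>)) *\<^sub>R \<rho>'"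
    using m by (simp add: E_form[OF A\<rho> B\<rho>])
  moreover have "c * (l * m * \<beta> - \<beta>) > 0" using E(1) \<beta> lm by simp
  ultimately show ?thesis using \<rho>' by (rule reachableI)
qed

theorem reachable_of_OmegaF_gt:
  assumes "affine_free_set F" and "affine_free_set F'"
    and "\<rho> \<in> density_ops" and "\<rho>' \<in> density_ops" and "\<sigma>' \<in> F'"
    and "loewner_le \<rho>' (l *\<^sub>R \<sigma>')" and "loewner_le \<sigma>' (m *\<^sub>R \<rho>')"
    and "OmegaF F \<rho> > ereal (l * m)"
  shows "reachable F F' \<rho> \<rho>'"
proof -
  have F: "F \<subseteq> density_ops" and F': "F' \<subseteq> density_ops"
    using assms(1,2) by (simp_all add: affine_free_set_density_ops)
  have \<sigma>': "\<sigma>' \<in> density_ops" using F' assms(5) by blast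
  have l: "l \<ge> 1" and m: "m \<ge> 1"
    using loewner_le_scaleR_imp_ge_1[OF assms(4) \<sigma>' assms(6)]
      loewner_le_scaleR_imp_ge_1[OF \<sigma>' assms(4) assms(7)] .
  show ?thesis
  proof (cases "l * m > 1")
    case True
    obtain A B \<beta> where "psd A" "psd B" "\<And>\<sigma>. \<sigma> \<in> F \<Longrightarrow> trace (A ** \<sigma>) = trace (B ** \<sigma>)"
      "trace (A ** \<rho>) = of_real (l * m * \<beta>)" "trace (B ** \<rho>) = of_real \<beta>" "\<beta> > 0"
      using OmegaF_gt_balanced_pair[OF assms(1,3,8) True] by blast
    then show ?thesis using reachable_of_balanced_pair[OF F F' assms(4-7)] True by blast
  next
    case False
    moreover have "l \<le> l * m" using mult_left_mono[of 1 m l] l m by simp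
    ultimately have "l = 1" using l by linarith
    then have "psd (\<sigma>' - \<rho>')" using assms(6) by (simp add: loewner_le_def)
    moreover have "trace (\<sigma>' - \<rho>') = 0" using \<sigma>' assms(4) by (simp add: trace_sub density_opsD)
    ultimately have "\<rho>' = \<sigma>'" using psd_trace_eq_0 by fastforce
    then show ?thesis using reachable_free_state[OF F F' assms(3,5)] by simp
  qed
qed

section \<open>States with infinite robustness\<close>

text \<open>Split \<open>t = u + z\<close> with \<open>u\<close> in the range of \<open>S\<close> and \<open>z\<close> orthogonal to it; then \<open>z\<close> lies in
  the kernel of \<open>S\<close>, so it is orthogonal to \<open>t\<close> as well, and \<open>z = 0\<close>.\<close>

lemma hermitian_range_of_orthogonal_kernel:
  assumes "hermitian (S::complex^'n^'n)" and "\<And>x. S *v x = 0 \<Longrightarrow> cinner t x = 0"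
  obtains y where "t = S *v y"
proof -
  define U where "U = range (\<lambda>y. S *v y)"
  have "subspace U"
    unfolding subspace_def U_def
  proof (intro conjI ballI allI)
    show "0 \<in> range (\<lambda>y. S *v y)" by (rule range_eqI[of _ _ 0]) simp
  next
    fix a b assume "a \<in> range (\<lambda>y. S *v y)" "b \<in> range (\<lambda>y. S *v y)"
    then show "a + b \<in> range (\<lambda>y. S *v y)" by (auto simp flip: matrix_vector_right_distrib)
  next
    fix c :: real and a assume "a \<in> range (\<lambda>y. S *v y)"
    then show "c *\<^sub>R a \<in> range (\<lambda>y. S *v y)"
      by (auto simp: scaleR_eq_scalar_mult simp flip: vector_scalar_commute)
  qed
  then have U: "span U = U" by (simp add: span_eq_iff)
  obtain u z where u: "u \<in> span U" and z: "\<And>w. w \<in> span U \<Longrightarrow> orthogonal z w" and t: "t = u + z"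
    using orthogonal_subspace_decomp_exists[of U t] by blast
  have inner_eq: "z \<bullet> w = Re (cinner z w)" for w
    by (simp add: inner_vec_def inner_complex_def cinner_def Re_sum)
  have zS: "cinner z (S *v y) = 0" for y
  proof -
    have "S *v w \<in> span U" for w by (rule span_base) (simp add: U_def)
    then have "Re (cinner z (S *v y)) = 0" and "Re (cinner z (S *v (\<i> *s y))) = 0"
      using z by (auto simp: orthogonal_def inner_eq)
    then show ?thesis by (simp add: vector_scalar_commute cinner_scalar_mult_right complex_eq_iff)
  qed
  have "u \<in> U" using u U by simp
  then obtain y where y: "u = S *v y" unfolding U_def by blast
  have "cinner (S *v z) (S *v z) = 0"
    using hermitian_cinner_swap[OF assms(1), of "S *v z" z] zS by simp
  then have "cinner t z = 0" using assms(2) by (simp add: cinner_self_eq_0_iff)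
  moreover have "cinner u z = 0" using zS[of y] by (simp add: y cinner_commute[of "S *v y" z])
  ultimately have "cinner z z = 0" by (simp add: t cinner_add_left)
  then have "z = 0" by (simp add: cinner_self_eq_0_iff)
  then show thesis using that t y by simp
qed

text \<open>Writing \<open>R = \<Sum> |t\<^sub>k\<rangle>\<langle>t\<^sub>k|\<close> with \<open>t\<^sub>k = S y\<^sub>k\<close>, Cauchy--Schwarz for the form of \<open>S\<close>
  gives \<open>R \<le> (\<Sum> \<langle>y\<^sub>k, S y\<^sub>k\<rangle>) S\<close>.\<close>

lemma loewner_le_scaleR_of_kernel:
  assumes S: "psd (S::complex^'n^'n)" and R: "psd R" and ker: "\<And>x. S *v x = 0 \<Longrightarrow> R *v x = 0"
  obtains c where "loewner_le R (c *\<^sub>R S)"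
proof -
  obtain m :: nat and ts where R_eq: "R = (\<Sum>k<m. outer (ts k))" using psd_sum_outer[OF R] by blast
  have S_herm: "hermitian S" using S psd_hermitian by blast
  have R_qform: "Re (qform R x) = (\<Sum>k<m. (cmod (cinner (ts k) x))\<^sup>2)" for x
    by (simp add: R_eq qform_sum qform_outer Re_sum)
  have "\<exists>y. ts k = S *v y" if k: "k < m" for k
  proof -
    have "cinner (ts k) x = 0" if "S *v x = 0" for x
    proof -
      have "(\<Sum>k<m. (cmod (cinner (ts k) x))\<^sup>2) = 0"
        using ker[OF that] R_qform[of x] by (simp add: qform_def)
      then show ?thesis using k by (simp add: sum_nonneg_eq_0_iff)
    qed
    then show ?thesis using hermitian_range_of_orthogonal_kernel[OF S_herm] by metis
  qed
  then obtain y where y: "\<And>k. k < m \<Longrightarrow> ts k = S *v y k" by metis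
  define c where "c = (\<Sum>k<m. Re (qform S (y k)))"
  have "Re (qform R x) \<le> c * Re (qform S x)" for x
  proof -
    have "(cmod (cinner (ts k) x))\<^sup>2 \<le> Re (qform S x) * Re (qform S (y k))" if k: "k < m" for k
      using psd_cauchy_schwarz[OF S, of x "y k"] by (simp add: y[OF k] cinner_commute[of "S *v y k" x])
    then have "(\<Sum>k<m. (cmod (cinner (ts k) x))\<^sup>2) \<le> (\<Sum>k<m. Re (qform S x) * Re (qform S (y k)))"
      by (intro sum_mono) simp
    then show ?thesis by (simp add: R_qform c_def sum_distrib_left mult.commute)
  qed
  moreover have "hermitian (c *\<^sub>R S - R)"
    using S_herm psd_hermitian[OF R] by (intro hermitian_diff hermitian_scaleR)
  ultimately have "loewner_le R (c *\<^sub>R S)"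
    by (simp add: loewner_le_def psd_iff_hermitian qform_diff qform_scaleR)
  then show thesis by (rule that)
qed

text \<open>The barycentre of a basis of the span will do.\<close>

lemma convex_states_minimal_kernel:
  fixes F :: "(complex^'n^'n) set"
  assumes F: "F \<subseteq> density_ops" "F \<noteq> {}" "convex F"
  obtains \<sigma>0 where "\<sigma>0 \<in> F" and "\<And>\<sigma> x. \<sigma> \<in> F \<Longrightarrow> \<sigma>0 *v x = 0 \<Longrightarrow> \<sigma> *v x = 0"
proof -
  obtain Bs where Bs: "Bs \<subseteq> F" "independent Bs" "F \<subseteq> span Bs"
    using maximal_independent_subset[of F] by blast
  have fin: "finite Bs" using Bs(2) by (rule finiteI_independent)
  have "Bs \<noteq> {}"
  proof
    assume "Bs = {}"
    then have "F \<subseteq> {0}" using Bs(3) by simp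
    then have "(0::complex^'n^'n) \<in> density_ops" using F(1,2) by blast
    then show False by (simp add: density_ops_def)
  qed
  then have n: "card Bs > 0" using fin by (simp add: card_gt_0_iff)
  define \<sigma>0 where "\<sigma>0 = (\<Sum>b\<in>Bs. (1 / real (card Bs)) *\<^sub>R b)"
  have "\<sigma>0 \<in> F"
    unfolding \<sigma>0_def using Bs(1) n by (intro convex_sum[OF fin F(3)]) auto
  moreover have "\<sigma> *v x = 0" if \<sigma>: "\<sigma> \<in> F" and x: "\<sigma>0 *v x = 0" for x \<sigma>
  proof -
    have Bs_psd: "psd b" if "b \<in> Bs" for b using that Bs(1) F(1) by (auto simp: density_opsD)
    have "Re (qform \<sigma>0 x) = 0" using x by (simp add: qform_def)
    then have "(\<Sum>b\<in>Bs. (1 / real (card Bs)) * Re (qform b x)) = 0"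
      by (simp add: \<sigma>0_def qform_sum qform_scaleR Re_sum)
    then have "\<forall>b\<in>Bs. (1 / real (card Bs)) * Re (qform b x) = 0"
      using Bs_psd fin by (subst sum_nonneg_eq_0_iff[symmetric]) (auto simp: psd_iff_qform)
    then have Bs_ker: "b *v x = 0" if "b \<in> Bs" for b
      using that n psd_qform_eq_0_imp_kernel[OF Bs_psd] by simp
    have "\<sigma> \<in> span Bs" using \<sigma> Bs(3) by blast
    moreover have "subspace {M::complex^'n^'n. M *v x = 0}"
      unfolding subspace_def
      by (simp add: matrix_vector_mult_add_rdistrib matrix_vector_mult_scaleR_left)
    ultimately show ?thesis using Bs_ker by (rule span_induct[where P = "\<lambda>M. M *v x = 0"])
  qed
  ultimately show thesis by (rule that)
qed

text \<open>Otherwise \<open>\<rho>\<close> would be dominated by a multiple of the free state of minimal kernel.\<close>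

lemma RF_infinite_free_kernel_vector:
  assumes "affine_free_set F" and "\<rho> \<in> density_ops" and "RF F \<rho> = \<infinity>"
  obtains x where "\<And>\<sigma>. \<sigma> \<in> F \<Longrightarrow> \<sigma> *v x = 0" and "Re (qform \<rho> x) > 0"
proof -
  have F: "F \<subseteq> density_ops" "F \<noteq> {}" "convex F" using assms(1) unfolding affine_free_set_def by blast+
  obtain \<sigma>0 where \<sigma>0F: "\<sigma>0 \<in> F" and ker: "\<And>\<sigma> x. \<sigma> \<in> F \<Longrightarrow> \<sigma>0 *v x = 0 \<Longrightarrow> \<sigma> *v x = 0"
    using convex_states_minimal_kernel[OF F] by blast
  have \<rho>: "psd \<rho>" using assms(2) by (simp add: density_opsD)
  have "\<exists>x. \<sigma>0 *v x = 0 \<and> \<rho> *v x \<noteq> 0"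
  proof (rule ccontr)
    assume "\<not> ?thesis"
    then have "\<And>x. \<sigma>0 *v x = 0 \<Longrightarrow> \<rho> *v x = 0" by blast
    moreover have "psd \<sigma>0" using \<sigma>0F F(1) by (auto simp: density_opsD)
    ultimately obtain c where "loewner_le \<rho> (c *\<^sub>R \<sigma>0)"
      using loewner_le_scaleR_of_kernel \<rho> by blast
    then have "RF F \<rho> \<le> ereal c" by (rule RF_le[OF \<sigma>0F])
    then show False using assms(3) by simp
  qed
  then obtain x where x: "\<sigma>0 *v x = 0" and \<rho>x: "\<rho> *v x \<noteq> 0" by blast
  have "Re (qform \<rho> x) \<noteq> 0" using psd_qform_eq_0_imp_kernel[OF \<rho>] \<rho>x by blast
  moreover have "Re (qform \<rho> x) \<ge> 0" using \<rho> by (simp add: psd_iff_qform)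
  ultimately have "Re (qform \<rho> x) > 0" by simp
  then show thesis using that ker[OF _ x] by blast
qed

theorem reachable_of_RF_infinite:
  assumes "affine_free_set F" and "affine_free_set F'"
    and "\<rho> \<in> density_ops" and "\<rho>' \<in> density_ops" and "RF F \<rho> = \<infinity>"
  shows "reachable F F' \<rho> \<rho>'"
proof -
  have F: "F \<subseteq> density_ops" and F': "F' \<subseteq> density_ops" "F' \<noteq> {}"
    using assms(1,2) unfolding affine_free_set_def by blast+
  obtain x where x: "\<And>\<sigma>. \<sigma> \<in> F \<Longrightarrow> \<sigma> *v x = 0" and \<rho>x: "Re (qform \<rho> x) > 0"
    using RF_infinite_free_kernel_vector[OF assms(1,3,5)] by blast
  have \<rho>': "psd \<rho>'" "trace \<rho>' = 1" using assms(4) by (simp_all add: density_opsD)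
  define n where "n = Re (cinner x x)"
  have n: "n > 0" using \<rho>x by (auto simp: n_def cinner_self_Re qform_def)
  define A where "A = (1 / n) *\<^sub>R outer x"
  have A: "psd A" unfolding A_def using n by (intro psd_scaleR psd_outer) simp
  have trA: "Re (trace A) = 1" using n by (simp add: A_def trace_scaleR trace_outer n_def)
  have trAX: "trace (A ** X) = of_real (1 / n) * qform X x" for X
    by (simp add: A_def trace_mult_scaleR_left trace_outer_mult)
  have "prepare A \<rho>' \<in> free_ops F F'"
  proof (rule free_opsI[OF completely_positive_prepare[OF A \<rho>'(1)] _ _ F F'(1)])
    show "Re (trace (prepare A \<rho>' X)) \<le> Re (trace X)" if "psd X" for X
      using trace_prepare_le[OF A \<rho>'(1) that] by (simp add: trA \<rho>'(2))
    fix \<sigma> assume "\<sigma> \<in> F"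
    then have "prepare A \<rho>' \<sigma> = 0 *\<^sub>R \<rho>'"
      by (intro prepare_of_real) (simp add: trAX x qform_def)
    then show "\<exists>\<sigma>'\<in>F'. \<exists>p \<ge> 0. prepare A \<rho>' \<sigma> = p *\<^sub>R \<sigma>'"
      using F'(2) by auto
  qed
  moreover have "prepare A \<rho>' \<rho> = (1 / n * Re (qform \<rho> x)) *\<^sub>R \<rho>'"
    using hermitian_qform_real[OF psd_hermitian[OF density_opsD[OF assms(3), THEN conjunct1]], of x]
    by (intro prepare_of_real) (simp add: trAX complex_eq_iff)
  moreover have "1 / n * Re (qform \<rho> x) > 0" using n \<rho>x by simp
  ultimately show ?thesis using assms(4) by (rule reachableI)
qed

section \<open>Approximation by mixtures with a free state\<close>

lemma closure_if_mixtures: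
  fixes x :: "'a::real_normed_vector"
  assumes "bounded S" and "\<And>\<epsilon>. 0 < \<epsilon> \<Longrightarrow> \<epsilon> < 1 \<Longrightarrow> \<exists>y\<in>S. (1 - \<epsilon>) *\<^sub>R x + \<epsilon> *\<^sub>R y \<in> R"
  shows "x \<in> closure R"
  unfolding closure_approachable
proof (intro allI impI)
  fix e :: real assume e: "e > 0"
  obtain B where B: "B > 0" "\<And>y. y \<in> S \<Longrightarrow> norm y \<le> B"
    using assms(1) unfolding bounded_pos by blast
  define K where "K = B + norm x"
  have K: "K > 0" using B(1) by (simp add: K_def add_pos_nonneg)
  define \<epsilon> where "\<epsilon> = min (1/2) (e / (2 * K))"
  have \<epsilon>: "0 < \<epsilon>" "\<epsilon> < 1" using e K by (simp_all add: \<epsilon>_def)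
  obtain y where y: "y \<in> S" and mix: "(1 - \<epsilon>) *\<^sub>R x + \<epsilon> *\<^sub>R y \<in> R" using assms(2)[OF \<epsilon>] by blast
  have "dist ((1 - \<epsilon>) *\<^sub>R x + \<epsilon> *\<^sub>R y) x = \<epsilon> * norm (y - x)"
    using \<epsilon> by (simp add: dist_norm algebra_simps flip: scaleR_diff_right)
  also have "\<dots> \<le> \<epsilon> * K"
    using \<epsilon> B(2)[OF y] norm_triangle_ineq4[of y x] by (simp add: K_def)
  also have "\<dots> \<le> e / 2" using K e by (simp add: \<epsilon>_def min_def field_simps)
  finally show "\<exists>z\<in>R. dist z x < e" using mix e by force
qed

lemma bounded_density_ops: "bounded (density_ops :: (complex^'n^'n) set)"
proof -
  have "norm \<rho> \<le> real CARD('n)^2" if "\<rho> \<in> density_ops" for \<rho> :: "complex^'n^'n"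
    using psd_norm_le_trace[of \<rho>] that by (simp add: density_ops_def)
  then show ?thesis unfolding bounded_iff by blast
qed

lemma mixture_density_ops:
  assumes "\<rho> \<in> density_ops" and "\<sigma> \<in> density_ops" and "0 \<le> \<epsilon>" and "\<epsilon> \<le> 1"
  shows "(1 - \<epsilon>) *\<^sub>R \<rho> + \<epsilon> *\<^sub>R \<sigma> \<in> density_ops"
  using assms unfolding density_ops_def by (auto intro!: psd_add psd_scaleR simp: trace_add trace_scaleR)

lemma loewner_le_mixture:
  assumes "loewner_le \<rho> (l *\<^sub>R \<sigma>)" and "\<epsilon> \<le> 1"
  shows "loewner_le ((1 - \<epsilon>) *\<^sub>R \<rho> + \<epsilon> *\<^sub>R \<sigma>) (((1 - \<epsilon>) * l + \<epsilon>) *\<^sub>R \<sigma>)"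
proof -
  have "((1 - \<epsilon>) * l + \<epsilon>) *\<^sub>R \<sigma> - ((1 - \<epsilon>) *\<^sub>R \<rho> + \<epsilon> *\<^sub>R \<sigma>) = (1 - \<epsilon>) *\<^sub>R (l *\<^sub>R \<sigma> - \<rho>)"
    by (simp add: algebra_simps)
  then show ?thesis using assms unfolding loewner_le_def by (simp add: psd_scaleR)
qed

lemma loewner_le_mixture_component:
  assumes "psd \<rho>" and "0 < \<epsilon>" and "\<epsilon> \<le> 1"
  shows "loewner_le \<sigma> ((1 / \<epsilon>) *\<^sub>R ((1 - \<epsilon>) *\<^sub>R \<rho> + \<epsilon> *\<^sub>R \<sigma>))"
proof -
  have "(1 / \<epsilon>) *\<^sub>R ((1 - \<epsilon>) *\<^sub>R \<rho> + \<epsilon> *\<^sub>R \<sigma>) - \<sigma> = ((1 - \<epsilon>) / \<epsilon>) *\<^sub>R \<rho>"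
    using assms(2) by (simp add: scaleR_add_right)
  then show ?thesis using assms unfolding loewner_le_def by (simp add: psd_scaleR)
qed

lemma loewner_le_mixture_component':
  assumes "loewner_le \<sigma> (m *\<^sub>R \<rho>)" and "0 \<le> \<epsilon>" and "\<epsilon> < 1" and "m \<ge> 1"
  shows "loewner_le \<sigma> ((m / (1 - \<epsilon> + \<epsilon> * m)) *\<^sub>R ((1 - \<epsilon>) *\<^sub>R \<rho> + \<epsilon> *\<^sub>R \<sigma>))"
proof -
  define D where "D = 1 - \<epsilon> + \<epsilon> * m"
  have D: "D > 0" using assms(2-4) by (simp add: D_def add_pos_nonneg)
  have c1: "m / D * (1 - \<epsilon>) = (1 - \<epsilon>) / D * m" by simp
  have c2: "m / D * \<epsilon> - 1 = - ((1 - \<epsilon>) / D)" using D by (simp add: D_def field_simps)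
  have "(m / D) *\<^sub>R ((1 - \<epsilon>) *\<^sub>R \<rho> + \<epsilon> *\<^sub>R \<sigma>) - \<sigma>
      = (m / D * (1 - \<epsilon>)) *\<^sub>R \<rho> + (m / D * \<epsilon> - 1) *\<^sub>R \<sigma>"
    by (simp only: scaleR_add_right scaleR_scaleR scaleR_diff_left[of "m / D * \<epsilon>" 1 \<sigma>] scaleR_one
        add_diff_eq)
  also have "\<dots> = ((1 - \<epsilon>) / D * m) *\<^sub>R \<rho> + (- ((1 - \<epsilon>) / D)) *\<^sub>R \<sigma>"
    by (simp only: c1 c2)
  also have "\<dots> = ((1 - \<epsilon>) / D) *\<^sub>R (m *\<^sub>R \<rho> - \<sigma>)"
    by (simp add: scaleR_diff_right)
  finally have "(m / D) *\<^sub>R ((1 - \<epsilon>) *\<^sub>R \<rho> + \<epsilon> *\<^sub>R \<sigma>) - \<sigma> = ((1 - \<epsilon>) / D) *\<^sub>R (m *\<^sub>R \<rho> - \<sigma>)" .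
  then show ?thesis using assms D unfolding loewner_le_def D_def[symmetric] by (simp add: psd_scaleR)
qed

lemma mixture_product_le:
  fixes l m \<epsilon> :: real
  assumes "l \<ge> 1" and "m \<ge> 1" and "0 \<le> \<epsilon>" and "\<epsilon> < 1"
  shows "((1 - \<epsilon>) * l + \<epsilon>) * (m / (1 - \<epsilon> + \<epsilon> * m)) \<le> (1 - \<epsilon>) * (l * m) + \<epsilon>"
proof -
  define D where "D = 1 - \<epsilon> + \<epsilon> * m"
  have D: "D > 0" using assms by (simp add: D_def add_pos_nonneg)
  have "((1 - \<epsilon>) * (l * m) + \<epsilon>) * D - ((1 - \<epsilon>) * l + \<epsilon>) * m = \<epsilon> * (1 - \<epsilon>) * (m - 1) * (l * m - 1)"
    by (simp add: D_def algebra_simps)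
  moreover have "l * m \<ge> 1" using assms(1,2) mult_mono[of 1 l 1 m] by simp
  then have "\<epsilon> * (1 - \<epsilon>) * (m - 1) * (l * m - 1) \<ge> 0"
    using assms by (intro mult_nonneg_nonneg) simp_all
  ultimately have "((1 - \<epsilon>) * l + \<epsilon>) * m \<le> ((1 - \<epsilon>) * (l * m) + \<epsilon>) * D" by simp
  then show ?thesis using D unfolding D_def[symmetric] by (simp add: field_simps)
qed

lemma closure_reachable_of_OmegaF_infinite:
  assumes "affine_free_set F" and "affine_free_set F'" and "\<rho> \<in> density_ops" and "\<rho>' \<in> density_ops"
    and "OmegaF F \<rho> = \<infinity>" and "RF F' \<rho>' < \<infinity>"
  shows "\<rho>' \<in> closure (Collect (reachable F F' \<rho>))"
proof (rule closure_if_mixtures[OF bounded_density_ops])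
  obtain \<sigma>' l where \<sigma>': "\<sigma>' \<in> F'" and le: "loewner_le \<rho>' (l *\<^sub>R \<sigma>')"
    using RF_less_top_witness[OF assms(6)] by blast
  have \<sigma>'_dens: "\<sigma>' \<in> density_ops" using affine_free_set_density_ops[OF assms(2)] \<sigma>' by blast
  fix \<epsilon> :: real assume \<epsilon>: "0 < \<epsilon>" "\<epsilon> < 1"
  have "reachable F F' \<rho> ((1 - \<epsilon>) *\<^sub>R \<rho>' + \<epsilon> *\<^sub>R \<sigma>')"
  proof (rule reachable_of_OmegaF_gt[OF assms(1-3) _ \<sigma>'])
    show "(1 - \<epsilon>) *\<^sub>R \<rho>' + \<epsilon> *\<^sub>R \<sigma>' \<in> density_ops"
      using assms(4) \<sigma>'_dens \<epsilon> by (intro mixture_density_ops) simp_all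
    show "loewner_le ((1 - \<epsilon>) *\<^sub>R \<rho>' + \<epsilon> *\<^sub>R \<sigma>') (((1 - \<epsilon>) * l + \<epsilon>) *\<^sub>R \<sigma>')"
      using le \<epsilon> by (simp add: loewner_le_mixture)
    show "loewner_le \<sigma>' ((1 / \<epsilon>) *\<^sub>R ((1 - \<epsilon>) *\<^sub>R \<rho>' + \<epsilon> *\<^sub>R \<sigma>'))"
      using assms(4) \<epsilon> by (intro loewner_le_mixture_component) (simp_all add: density_opsD)
    show "ereal (((1 - \<epsilon>) * l + \<epsilon>) * (1 / \<epsilon>)) < OmegaF F \<rho>" using assms(5) by simp
  qed
  then show "\<exists>y\<in>density_ops. (1 - \<epsilon>) *\<^sub>R \<rho>' + \<epsilon> *\<^sub>R y \<in> Collect (reachable F F' \<rho>)"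
    using \<sigma>'_dens by blast
qed

lemma closure_reachable_of_OmegaF_le:
  assumes "affine_free_set F" and "affine_free_set F'" and "\<rho> \<in> density_ops" and "\<rho>' \<in> density_ops"
    and "OmegaF F \<rho> = ereal w" and "OmegaF F' \<rho>' \<le> ereal w" and "w > 1"
  shows "\<rho>' \<in> closure (Collect (reachable F F' \<rho>))"
proof (rule closure_if_mixtures[OF bounded_density_ops])
  have F': "F' \<subseteq> density_ops" using assms(2) by (rule affine_free_set_density_ops)
  fix \<epsilon> :: real assume \<epsilon>: "0 < \<epsilon>" "\<epsilon> < 1"
  define \<eta> where "\<eta> = \<epsilon> * (w - 1) / 2"
  have "0 < \<epsilon> * (w - 1)" using assms(7) \<epsilon> by simp
  then have \<eta>: "0 < \<eta>" "\<eta> < \<epsilon> * (w - 1)" by (simp_all add: \<eta>_def)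
  moreover have "(1 - \<epsilon>) * \<eta> \<le> \<eta>" using \<eta>(1) \<epsilon> by (simp add: algebra_simps)
  ultimately have \<eta>_small: "(1 - \<epsilon>) * \<eta> < \<epsilon> * (w - 1)" by linarith
  have "OmegaF F' \<rho>' < ereal (w + \<eta>)" using assms(6) \<eta>(1) by (simp add: le_less_trans)
  then obtain \<sigma>' l m where \<sigma>': "\<sigma>' \<in> F'" and le1: "loewner_le \<rho>' (l *\<^sub>R \<sigma>')"
    and le2: "loewner_le \<sigma>' (m *\<^sub>R \<rho>')" and lm: "l * m < w + \<eta>"
    using OmegaF_less_witness[OF F' assms(4)] by blast
  have \<sigma>'_dens: "\<sigma>' \<in> density_ops" using F' \<sigma>' by blast
  have l: "l \<ge> 1" and m: "m \<ge> 1"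
    using loewner_le_scaleR_imp_ge_1[OF assms(4) \<sigma>'_dens le1]
      loewner_le_scaleR_imp_ge_1[OF \<sigma>'_dens assms(4) le2] .
  have "((1 - \<epsilon>) * l + \<epsilon>) * (m / (1 - \<epsilon> + \<epsilon> * m)) \<le> (1 - \<epsilon>) * (l * m) + \<epsilon>"
    using l m \<epsilon> by (intro mixture_product_le) simp_all
  also have "\<dots> \<le> (1 - \<epsilon>) * (w + \<eta>) + \<epsilon>" using lm \<epsilon> by (simp add: mult_left_mono)
  also have "\<dots> < w" using \<eta>_small by (simp add: algebra_simps)
  finally have lt: "ereal (((1 - \<epsilon>) * l + \<epsilon>) * (m / (1 - \<epsilon> + \<epsilon> * m))) < OmegaF F \<rho>"
    using assms(5) by simp
  have "reachable F F' \<rho> ((1 - \<epsilon>) *\<^sub>R \<rho>' + \<epsilon> *\<^sub>R \<sigma>')"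
    using \<epsilon> \<sigma>'_dens m
    by (intro reachable_of_OmegaF_gt[OF assms(1-3) _ \<sigma>' _ _ lt] mixture_density_ops assms(4)
        loewner_le_mixture[OF le1] loewner_le_mixture_component'[OF le2]) simp_all
  then show "\<exists>y\<in>density_ops. (1 - \<epsilon>) *\<^sub>R \<rho>' + \<epsilon> *\<^sub>R y \<in> Collect (reachable F F' \<rho>)"
    using \<sigma>'_dens by blast
qed

lemma norm_diff_le_of_loewner_le:
  fixes \<rho> \<sigma> :: "complex^'n^'n"
  assumes "\<rho> \<in> density_ops" and "\<sigma> \<in> density_ops" and "loewner_le \<rho> (l *\<^sub>R \<sigma>)"
  shows "norm (\<sigma> - \<rho>) \<le> 2 * real CARD('n)^2 * (l - 1)"
proof -
  define C where "C = real CARD('n)^2"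
  define X where "X = l *\<^sub>R \<sigma> - \<rho>"
  have l: "l \<ge> 1" using loewner_le_scaleR_imp_ge_1[OF assms] .
  have "psd X" using assms(3) by (simp add: X_def loewner_le_def)
  moreover have "Re (trace X) = l - 1"
    using assms(1,2) by (simp add: X_def trace_sub trace_scaleR density_opsD)
  ultimately have X: "norm X \<le> C * (l - 1)" using psd_norm_le_trace[of X] by (simp add: C_def)
  have \<sigma>: "norm \<sigma> \<le> C" using psd_norm_le_trace[of \<sigma>] assms(2) by (simp add: C_def density_opsD)
  have "\<sigma> - \<rho> = X - (l - 1) *\<^sub>R \<sigma>" by (simp add: X_def algebra_simps)
  then have "norm (\<sigma> - \<rho>) \<le> norm X + norm ((l - 1) *\<^sub>R \<sigma>)" by (simp only: norm_triangle_ineq4)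
  then have "norm (\<sigma> - \<rho>) \<le> norm X + (l - 1) * norm \<sigma>" using l by simp
  also have "\<dots> \<le> 2 * C * (l - 1)"
    using X mult_left_mono[OF \<sigma>, of "l - 1"] l by (simp add: algebra_simps)
  finally show ?thesis by (simp add: C_def)
qed

text \<open>If \<open>\<Omega>(\<rho>) = 1\<close>, then \<open>\<rho>\<close> is a limit of free states, and free states form a
  closed set.\<close>

lemma OmegaF_le_1_imp_free:
  fixes \<rho> :: "complex^'n^'n"
  assumes "affine_free_set F" and "\<rho> \<in> density_ops" and "OmegaF F \<rho> \<le> 1"
  shows "\<rho> \<in> F"
proof -
  have F: "F \<subseteq> density_ops" using assms(1) by (rule affine_free_set_density_ops)
  define C where "C = 2 * real CARD('n)^2"
  have C: "C \<ge> 0" by (simp add: C_def)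
  have "\<rho> \<in> closure F"
    unfolding closure_approachable
  proof (intro allI impI)
    fix e :: real assume e: "e > 0"
    have "0 < e / (C + 1)" using e C by simp
    then have "(1::ereal) < ereal (1 + e / (C + 1))" by simp
    with assms(3) have "OmegaF F \<rho> < ereal (1 + e / (C + 1))" by (rule le_less_trans)
    then obtain \<sigma> l m where \<sigma>: "\<sigma> \<in> F" and le1: "loewner_le \<rho> (l *\<^sub>R \<sigma>)"
      and le2: "loewner_le \<sigma> (m *\<^sub>R \<rho>)" and lm: "l * m < 1 + e / (C + 1)"
      using OmegaF_less_witness[OF F assms(2)] by blast
    have \<sigma>_dens: "\<sigma> \<in> density_ops" using F \<sigma> by blast
    have l: "l \<ge> 1" and m: "m \<ge> 1"
      using loewner_le_scaleR_imp_ge_1[OF assms(2) \<sigma>_dens le1]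
        loewner_le_scaleR_imp_ge_1[OF \<sigma>_dens assms(2) le2] .
    have "l \<le> l * m" using mult_left_mono[of 1 m l] l m by simp
    then have "l - 1 < e / (C + 1)" using lm by simp
    then have "C * (l - 1) \<le> C * (e / (C + 1))" using C by (intro mult_left_mono) simp_all
    also have "\<dots> < e" using e C by (simp add: field_simps)
    finally have "norm (\<sigma> - \<rho>) < e"
      using norm_diff_le_of_loewner_le[OF assms(2) \<sigma>_dens le1] by (simp add: C_def)
    then show "\<exists>\<sigma>\<in>F. dist \<sigma> \<rho> < e" using \<sigma> by (auto simp: dist_norm)
  qed
  moreover have "closed F" using assms(1) unfolding affine_free_set_def by blast
  ultimately show ?thesis by (simp add: closure_closed)
qed

theorem theorem3:
  fixes F :: "(complex^'a::finite^'a) set" and F' :: "(complex^'b::finite^'b) set"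
    and \<rho> :: "complex^'a^'a" and \<rho>' :: "complex^'b^'b"
  assumes "affine_free_set F" and "affine_free_set F'"
    and "\<rho> \<in> density_ops" and "\<rho>' \<in> density_ops"
    and "(OmegaF F \<rho> < \<infinity> \<and> OmegaF F \<rho> \<ge> OmegaF F' \<rho>')
         \<or> (OmegaF F \<rho> = \<infinity> \<and> RF F' \<rho>' < \<infinity>)
         \<or> RF F \<rho> = \<infinity>"
  shows "prob_transformable F F' \<rho> \<rho>'"
  unfolding prob_transformable_iff_closure_reachable
proof -
  have F: "F \<subseteq> density_ops" and F': "F' \<subseteq> density_ops"
    using assms(1,2) by (simp_all add: affine_free_set_density_ops)
  consider "RF F \<rho> = \<infinity>" | "OmegaF F \<rho> = \<infinity>" "RF F' \<rho>' < \<infinity>"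
    | w where "OmegaF F \<rho> = ereal w" "OmegaF F' \<rho>' \<le> ereal w" "w = 1"
    | w where "OmegaF F \<rho> = ereal w" "OmegaF F' \<rho>' \<le> ereal w" "w > 1"
    using assms(5) OmegaF_ge_1[OF F assms(3)] by (cases "OmegaF F \<rho>") force+
  then show "\<rho>' \<in> closure (Collect (reachable F F' \<rho>))"
  proof cases
    case 1
    then show ?thesis using reachable_of_RF_infinite[OF assms(1-4)] closure_subset by blast
  next
    case 2
    then show ?thesis by (rule closure_reachable_of_OmegaF_infinite[OF assms(1-4)])
  next
    case (3 w)
    then have "\<rho>' \<in> F'" using OmegaF_le_1_imp_free[OF assms(2,4)] by (simp add: one_ereal_def)
    then show ?thesis using reachable_free_state[OF F F' assms(3)] closure_subset by blast
  next
    case (4 w)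
    then show ?thesis by (rule closure_reachable_of_OmegaF_le[OF assms(1-4)])
  qed
qed

end
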